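(* Assume the setting below. There exist $\varepsilon\in(0,1)$ and $C>1$ such that $\|\mathcal L_s^n\|_b\le C$ for all $s=\sigma+ib$ with $|\sigma|<\varepsilon$ and all $n\ge1$, where $\|\cdot\|_b$ is the operator norm on $C^\alpha_{\mathrm{loc}}(\Delta)$ induced by $\|\psi\|_b$.
   Context: Setting: $\alpha\in(0,1]$, $\Delta=[0,1]$, $\mathcal P$ countable Lebesgue-mod-0 partition into open intervals, $F$ full-branch and $C^{1+\alpha}$ on each element, $\mathcal H,\mathcal H_n$ inverse branches of $F,F^n$, with constants $C_0>0,\rho\in(0,1)$ such that $|h'|_\infty\le C_0\rho^n$ ($h\in\mathcal H_n$), $|\log|h'||_\alpha\le C_0$ ($h\in\mathcal H$); $r:\Delta\to(0,\infty)$ $C^1$ on elements of $\mathcal P$ with $|(r\circ h)'|_\infty\le C_0$ and $\sum_{h\in\mathcal H}e^{\varepsilon_0|r\circ h|_\infty}|h'|_\infty<\infty$ for some $\varepsilon_0>0$. $C^\alpha_{\mathrm{loc}}(\Delta)$: complex $\psi$ with $|\psi|_\infty+|\psi|_{\alpha,\mathrm{loc}}<\infty$, $|\psi|_{\alpha,\mathrm{loc}}=\sup_{h\in\mathcal H}\sup_{x\ne y}|\psi(hx)-\psi(hy)|/|x-y|^\alpha$; $\|\psi\|_b=\max\{|\psi|_\infty,|\psi|_{\alpha,\mathrm{loc}}/(1+|b|^\alpha)\}$. $P_s\psi=\sum_{h\in\mathcal H}e^{-sr\circ h}|h'|\psi\circ h$. For real $|\sigma|<\varepsilon$, $\lambda_\sigma>0$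 and $f_\sigma>0$ are the continuous families of simple leading eigenvalue and $\alpha$-Hölder eigenfunction of $P_\sigma$ ($\lambda_0=1$), with $\varepsilon$ small so that $1/2\le\lambda_\sigma\le2$, $f_0/2\le f_\sigma\le2f_0$, $|f_0|_\alpha/2\le|f_\sigma|_\alpha\le2|f_0|_\alpha$; $\mathcal L_s\psi=(\lambda_\sigma f_\sigma)^{-1}P_s(f_\sigma\psi)$ for $s=\sigma+ib$. *)

theory Defs
  imports "HOL-Analysis.Analysis"
begin

text \<open>The open unit interval; all functions on Delta = [0,1] are considered mod 0,
  i.e. on the interior (0,1).\<close>
definition DeltaI :: "real set" where
  "DeltaI = {0<..<1}"

definition is_open_interval :: "real set \<Rightarrow> bool" where
  "is_open_interval A \<longleftrightarrow> (\<exists>a b. a < b \<and> A = {a<..<b})"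

definition mod0_partition :: "real set set \<Rightarrow> bool" where
  "mod0_partition P \<longleftrightarrow> countable P
     \<and> (\<forall>A\<in>P. is_open_interval A \<and> A \<subseteq> {0..1})
     \<and> (\<forall>A\<in>P. \<forall>B\<in>P. A \<noteq> B \<longrightarrow> A \<inter> B = {})
     \<and> {0..1} - \<Union>P \<in> null_sets lebesgue"

text \<open>Inverse branches of F: h maps (0,1) bijectively onto a partition element and
  F (h x) = x; normalised to be 0 outside (0,1) so that each branch is a single function.\<close>
definition inv_branches :: "real set set \<Rightarrow> (real \<Rightarrow> real) \<Rightarrow> (real \<Rightarrow> real) set" where
  "inv_branches P F = {h. (\<exists>A\<in>P. bij_betw h DeltaI A \<and> (\<forall>x\<in>DeltaI. F (h x) = x))
                          \<and> (\<forall>x. x \<notin> DeltaI \<longrightarrow> h x = 0)}"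

fun inv_branches_n :: "real set set \<Rightarrow> (real \<Rightarrow> real) \<Rightarrow> nat \<Rightarrow> (real \<Rightarrow> real) set" where
  "inv_branches_n P F 0 = {\<lambda>x. if x \<in> DeltaI then x else 0}"
| "inv_branches_n P F (Suc n) = {h \<circ> g | h g. h \<in> inv_branches P F \<and> g \<in> inv_branches_n P F n}"

definition hoelder_on :: "real \<Rightarrow> real set \<Rightarrow> (real \<Rightarrow> 'a::real_normed_vector) \<Rightarrow> bool" where
  "hoelder_on \<alpha> S g \<longleftrightarrow> bounded (g ` S) \<and>
     (\<exists>K. \<forall>x\<in>S. \<forall>y\<in>S. norm (g x - g y) \<le> K * \<bar>x - y\<bar> powr \<alpha>)"

definition hoelder_semi :: "real \<Rightarrow> real set \<Rightarrow> (real \<Rightarrow> 'a::real_normed_vector) \<Rightarrow> real" where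
  "hoelder_semi \<alpha> S g = (SUP p \<in> {(x,y). x \<in> S \<and> y \<in> S \<and> x \<noteq> y}.
       norm (g (fst p) - g (snd p)) / \<bar>fst p - snd p\<bar> powr \<alpha>)"

definition hoelder_norm :: "real \<Rightarrow> real set \<Rightarrow> (real \<Rightarrow> 'a::real_normed_vector) \<Rightarrow> real" where
  "hoelder_norm \<alpha> S g = (SUP x\<in>S. norm (g x)) + hoelder_semi \<alpha> S g"

definition sup_norm :: "(real \<Rightarrow> complex) \<Rightarrow> real" where
  "sup_norm \<psi> = (SUP x\<in>DeltaI. norm (\<psi> x))"

definition loc_quots :: "real \<Rightarrow> (real \<Rightarrow> real) set \<Rightarrow> (real \<Rightarrow> complex) \<Rightarrow> real set" where
  "loc_quots \<alpha> H \<psi> = {norm (\<psi> (h x) - \<psi> (h y)) / \<bar>x - y\<bar> powr \<alpha> | h x y.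
       h \<in> H \<and> x \<in> DeltaI \<and> y \<in> DeltaI \<and> x \<noteq> y}"

definition loc_semi :: "real \<Rightarrow> (real \<Rightarrow> real) set \<Rightarrow> (real \<Rightarrow> complex) \<Rightarrow> real" where
  "loc_semi \<alpha> H \<psi> = Sup (loc_quots \<alpha> H \<psi>)"

definition C_loc :: "real \<Rightarrow> (real \<Rightarrow> real) set \<Rightarrow> (real \<Rightarrow> complex) set" where
  "C_loc \<alpha> H = {\<psi>. bounded (\<psi> ` DeltaI) \<and> bdd_above (loc_quots \<alpha> H \<psi>)}"

definition norm_b :: "real \<Rightarrow> (real \<Rightarrow> real) set \<Rightarrow> real \<Rightarrow> (real \<Rightarrow> complex) \<Rightarrow> real" where
  "norm_b \<alpha> H b \<psi> = max (sup_norm \<psi>) (loc_semi \<alpha> H \<psi> / (1 + \<bar>b\<bar> powr \<alpha>))"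

definition Ptr :: "real set set \<Rightarrow> (real \<Rightarrow> real) \<Rightarrow> (real \<Rightarrow> real) \<Rightarrow> complex
                   \<Rightarrow> (real \<Rightarrow> complex) \<Rightarrow> real \<Rightarrow> complex" where
  "Ptr P F r s \<psi> x = infsum (\<lambda>h. exp (- (s * complex_of_real (r (h x))))
        * complex_of_real \<bar>deriv h x\<bar> * \<psi> (h x)) (inv_branches P F)"

definition Lnorm :: "real set set \<Rightarrow> (real \<Rightarrow> real) \<Rightarrow> (real \<Rightarrow> real) \<Rightarrow> (real \<Rightarrow> real)
                    \<Rightarrow> (real \<Rightarrow> real \<Rightarrow> real) \<Rightarrow> complex \<Rightarrow> (real \<Rightarrow> complex) \<Rightarrow> real \<Rightarrow> complex" where
  "Lnorm P F r lam f s \<psi> x =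
     Ptr P F r s (\<lambda>y. complex_of_real (f (Re s) y) * \<psi> y) x
       / complex_of_real (lam (Re s) * f (Re s) x)"

end

(*
  Write L_s psi (u) as the sum over inverse branches h of w_s(u,h) * psi (h u) with weights
  w_s(u,h) = exp (- s r(h u)) |h'(u)| f_sigma(h u) / (lambda_sigma f_sigma(u)).  Their moduli sum
  to 1 because f_sigma is an eigenfunction of P_sigma, so |L_s^n psi|_infty <= |psi|_infty.
  Once f_0, hence every f_sigma, is bounded away from 0, ln |w_s(., h)| is alpha-Hoelder with a
  constant independent of s and h, and the oscillating factor exp (- i b r(h u)) costs only a factor
  |b|^alpha.  Feeding this into the n-fold branches, which contract by C0 rho^n, gives
  |L_s^n psi|_alpha,loc <= C rho^(alpha n) |psi|_alpha,loc + C (1 + |b|^alpha) |psi|_infty,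
  which is the claimed bound ||L_s^n||_b <= C.

  The lower bound for f_0 is the one topological step: f_0 extends continuously to [0,1] and
  dominates a positive multiple of f_0 o h for every branch h, so a zero of the extension would
  sit at 0 or 1 and be carried along by every extended branch; this is only possible for a
  partition consisting of one full branch, which the contraction of the inverse branches forbids.
*)

theory Submission
  imports Defs
begin

lemma norm_cis_diff_le: "norm (cis a - cis b) \<le> \<bar>a - b\<bar>"
proof -
  have "(norm (cis a - cis b))\<^sup>2 = (cos a - cos b)\<^sup>2 + (sin a - sin b)\<^sup>2"
    by (simp add: cmod_def)
  also have "\<dots> = 2 - 2 * cos (a - b)"
    by (simp add: power2_eq_square cos_diff algebra_simps)
  also have "\<dots> = 4 * (sin ((a - b) / 2))\<^sup>2"
  proof -
    define t where "t = (a - b) / 2"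
    have "a - b = 2 * t" by (simp add: t_def)
    then have "cos (a - b) = 1 - 2 * (sin t)\<^sup>2"
      using cos_double_sin[of t] by simp
    then show ?thesis unfolding t_def by simp
  qed
  also have "\<dots> \<le> (a - b)\<^sup>2"
  proof -
    have "(sin ((a - b) / 2))\<^sup>2 \<le> ((a - b) / 2)\<^sup>2"
      using abs_sin_x_le_abs_x[of "(a - b) / 2"] by (metis abs_le_square_iff)
    then show ?thesis by (simp add: power_divide)
  qed
  finally show ?thesis
    by (simp add: abs_le_square_iff[symmetric])
qed

lemma self_le_powr: "0 \<le> z \<Longrightarrow> z \<le> 1 \<Longrightarrow> a \<le> 1 \<Longrightarrow> (z::real) \<le> z powr a"
  using powr_mono'[of a 1 z] by simp

lemma norm_cis_diff_le_powr:
  assumes "0 < a" "a \<le> 1"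
  shows "norm (cis x - cis y) \<le> 2 * \<bar>x - y\<bar> powr a"
proof (cases "\<bar>x - y\<bar> \<le> 1")
  case True
  then have "norm (cis x - cis y) \<le> \<bar>x - y\<bar> powr a"
    using norm_cis_diff_le[of x y] self_le_powr[of "\<bar>x - y\<bar>" a] assms by linarith
  then show ?thesis
    using powr_ge_zero[of "\<bar>x - y\<bar>" a] by linarith
next
  case False
  then have "1 \<le> \<bar>x - y\<bar> powr a"
    using assms by (simp add: ge_one_powr_ge_zero)
  moreover have "norm (cis x - cis y) \<le> 2"
    using norm_triangle_ineq4[of "cis x" "cis y"] by simp
  ultimately show ?thesis by linarith
qed

lemma abs_exp_minus_one_le:
  fixes t :: real
  shows "\<bar>exp t - 1\<bar> \<le> \<bar>t\<bar> * exp \<bar>t\<bar>"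
proof (cases "t \<ge> 0")
  case True
  have "1 - t \<le> exp (- t)"
    using exp_ge_add_one_self[of "- t"] by simp
  then have "(1 - t) * exp t \<le> 1"
    using mult_right_mono[of "1 - t" "exp (- t)" "exp t"] by (simp add: exp_minus field_simps)
  then show ?thesis
    using True by (simp add: algebra_simps)
next
  case False
  then have "\<bar>exp t - 1\<bar> = 1 - exp t"
    by simp
  also have "\<dots> \<le> \<bar>t\<bar>"
    using exp_ge_add_one_self[of t] False by linarith
  also have "\<dots> \<le> \<bar>t\<bar> * exp \<bar>t\<bar>"
    by (simp add: mult_le_cancel_left1)
  finally show ?thesis .
qed

lemma abs_diff_le_of_abs_ln_diff_le:
  fixes a b d :: real
  assumes "0 < a" "0 < b" "\<bar>ln a - ln b\<bar> \<le> d"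
  shows "\<bar>a - b\<bar> \<le> d * exp d * b" and "a \<le> exp d * b"
proof -
  define t where "t = ln a - ln b"
  have t: "\<bar>t\<bar> \<le> d"
    using assms(3) by (simp add: t_def)
  have a: "a = b * exp t"
    using assms(1,2) by (simp add: t_def exp_diff)
  have "a - b = b * (exp t - 1)"
    by (simp add: a algebra_simps)
  then have "\<bar>a - b\<bar> = b * \<bar>exp t - 1\<bar>"
    using assms(2) by (simp add: abs_mult)
  also have "\<dots> \<le> b * (\<bar>t\<bar> * exp \<bar>t\<bar>)"
    using assms(2) abs_exp_minus_one_le[of t] by (simp add: mult_left_mono)
  also have "\<dots> \<le> b * (d * exp d)"
    using assms(2) t by (intro mult_left_mono mult_mono) auto
  finally show "\<bar>a - b\<bar> \<le> d * exp d * b"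
    by (simp add: mult.commute)
  have "exp t \<le> exp d"
    using t by simp
  then show "a \<le> exp d * b"
    using assms(2) by (simp add: a mult.commute)
qed

lemma abs_ln_diff_le:
  fixes a b m :: real
  assumes "0 < m" "m \<le> a" "m \<le> b"
  shows "\<bar>ln a - ln b\<bar> \<le> \<bar>a - b\<bar> / m"
proof -
  have "ln a - ln b \<le> (a - b) / b" "ln b - ln a \<le> (b - a) / a"
    using assms by (auto intro!: ln_diff_le)
  moreover have "(a - b) / b \<le> \<bar>a - b\<bar> / b" "(b - a) / a \<le> \<bar>a - b\<bar> / a"
    using assms by (auto intro!: divide_right_mono)
  moreover have "\<bar>a - b\<bar> / b \<le> \<bar>a - b\<bar> / m" "\<bar>a - b\<bar> / a \<le> \<bar>a - b\<bar> / m"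
    using assms by (auto intro!: divide_left_mono)
  ultimately show ?thesis
    by linarith
qed

lemma abs_diff_le_of_deriv_bound:
  fixes g :: "real \<Rightarrow> real"
  assumes "convex S"
    and "\<And>z. z \<in> S \<Longrightarrow> g differentiable (at z)"
    and "\<And>z. z \<in> S \<Longrightarrow> \<bar>deriv g z\<bar> \<le> B"
    and "x \<in> S" "y \<in> S"
  shows "\<bar>g x - g y\<bar> \<le> B * \<bar>x - y\<bar>"
proof -
  have "norm (g x - g y) \<le> B * norm (x - y)"
  proof (rule field_differentiable_bound[OF assms(1) _ _ assms(4,5)])
    fix z
    assume "z \<in> S"
    then show "(g has_field_derivative deriv g z) (at z within S)"
      using assms(2) by (simp add: DERIV_deriv_iff_real_differentiable has_field_derivative_at_within)
    show "norm (deriv g z) \<le> B"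
      using assms(3) \<open>z \<in> S\<close> by simp
  qed
  then show ?thesis by simp
qed

section \<open>Hoelder functions on the unit interval\<close>

lemma norm_diff_le_hoelder_semi:
  assumes "hoelder_on a S g" "x \<in> S" "y \<in> S"
  shows "norm (g x - g y) \<le> hoelder_semi a S g * \<bar>x - y\<bar> powr a"
proof (cases "x = y")
  case False
  obtain K where K: "\<forall>x\<in>S. \<forall>y\<in>S. norm (g x - g y) \<le> K * \<bar>x - y\<bar> powr a"
    using assms(1) unfolding hoelder_on_def by blast
  define Q where "Q = (\<lambda>p. norm (g (fst p) - g (snd p)) / \<bar>fst p - snd p\<bar> powr a)"
  have "bdd_above (Q ` {(x, y). x \<in> S \<and> y \<in> S \<and> x \<noteq> y})"
    using K by (intro bdd_aboveI2[where M = K]) (auto simp: Q_def divide_le_eq)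
  then have "Q (x, y) \<le> hoelder_semi a S g"
    unfolding hoelder_semi_def Q_def[symmetric] using assms False by (intro cSUP_upper) auto
  then show ?thesis
    using False by (simp add: Q_def divide_le_eq)
qed simp

lemma hoelder_semi_nonneg:
  assumes "hoelder_on a S g" "x \<in> S" "y \<in> S" "x \<noteq> y"
  shows "0 \<le> hoelder_semi a S g"
proof -
  have "0 \<le> hoelder_semi a S g * \<bar>x - y\<bar> powr a"
    using norm_diff_le_hoelder_semi[OF assms(1-3)] norm_ge_zero order_trans by blast
  moreover have "0 < \<bar>x - y\<bar> powr a"
    using assms(4) by simp
  ultimately show ?thesis
    by (simp add: zero_le_mult_iff)
qed

lemma hoelder_on_imp_uniformly_continuous_on:
  assumes "0 < a" "hoelder_on a S g"
  shows "uniformly_continuous_on S g"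
  unfolding uniformly_continuous_on_def
proof (intro allI impI)
  fix e :: real
  assume "0 < e"
  obtain K where K: "\<forall>x\<in>S. \<forall>y\<in>S. norm (g x - g y) \<le> K * \<bar>x - y\<bar> powr a"
    using assms(2) unfolding hoelder_on_def by blast
  define K' where "K' = max K 0 + 1"
  have K': "0 < K'" "K \<le> K'"
    by (auto simp: K'_def)
  define d where "d = (e / K') powr (1 / a)"
  have "0 < d" "d powr a = e / K'"
    using \<open>0 < e\<close> K' assms(1) by (simp_all add: d_def powr_powr)
  show "\<exists>d>0. \<forall>x\<in>S. \<forall>x'\<in>S. dist x' x < d \<longrightarrow> dist (g x') (g x) < e"
  proof (intro exI conjI ballI impI)
    fix x x'
    assume "x \<in> S" "x' \<in> S" "dist x' x < d"
    then have "\<bar>x' - x\<bar> powr a < d powr a"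
      using assms(1) by (intro powr_less_mono2) (auto simp: dist_real_def)
    then have "\<bar>x' - x\<bar> powr a < e / K'"
      using \<open>d powr a = e / K'\<close> by simp
    have "norm (g x' - g x) \<le> K' * \<bar>x' - x\<bar> powr a"
      using K \<open>x \<in> S\<close> \<open>x' \<in> S\<close> K'(2) by (meson mult_right_mono order_trans powr_ge_zero)
    also have "\<dots> < e"
      using \<open>\<bar>x' - x\<bar> powr a < e / K'\<close> K'(1) by (simp add: field_simps)
    finally show "dist (g x') (g x) < e"
      by (simp add: dist_norm)
  qed (fact \<open>0 < d\<close>)
qed

lemma closure_DeltaI [simp]: "closure DeltaI = {0..1}"
  by (simp add: DeltaI_def)

lemma convex_DeltaI: "convex DeltaI"
  by (simp add: DeltaI_def)

lemma DeltaI_subset_unit_interval: "DeltaI \<subseteq> {0..1}"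
  by (auto simp: DeltaI_def)

lemma continuous_le_on_unit_interval:
  fixes u v :: "real \<Rightarrow> real"
  assumes "continuous_on {0..1} u" "continuous_on {0..1} v"
    and "\<And>x. x \<in> DeltaI \<Longrightarrow> u x \<le> v x" and "t \<in> {0..1}"
  shows "u t \<le> v t"
proof -
  have "0 \<le> v t - u t"
    by (rule continuous_ge_on_closure[of DeltaI "\<lambda>x. v x - u x"])
      (use assms in \<open>auto intro: continuous_intros\<close>)
  then show ?thesis
    by simp
qed

lemma continuous_extension_from_DeltaI:
  fixes g :: "real \<Rightarrow> real"
  assumes "uniformly_continuous_on DeltaI g"
  obtains gb where "continuous_on {0..1} gb" "\<And>x. x \<in> DeltaI \<Longrightarrow> gb x = g x"
proof -
  obtain gb where gb: "uniformly_continuous_on {0..1} gb" "\<And>x. x \<in> DeltaI \<Longrightarrow> g x = gb x"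
    using uniformly_continuous_on_extension_on_closure[OF assms] closure_DeltaI by metis
  show ?thesis
    by (rule that[of gb]) (use gb uniformly_continuous_imp_continuous in auto)
qed

section \<open>Sup norm and local Hoelder seminorm\<close>

(* For G = Hn n this is the quantity propagated through the iterates of the transfer operator. *)
definition branchwise_hoelder :: "real \<Rightarrow> (real \<Rightarrow> real) set \<Rightarrow> real \<Rightarrow> (real \<Rightarrow> complex) \<Rightarrow> bool" where
  "branchwise_hoelder a G c \<phi> \<longleftrightarrow>
     (\<forall>g\<in>G. \<forall>x\<in>DeltaI. \<forall>y\<in>DeltaI. norm (\<phi> (g x) - \<phi> (g y)) \<le> c * \<bar>x - y\<bar> powr a)"

lemma branchwise_hoelder_mono:
  "branchwise_hoelder a G c \<phi> \<Longrightarrow> c \<le> c' \<Longrightarrow> branchwise_hoelder a G c' \<phi>"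
  unfolding branchwise_hoelder_def by (meson mult_right_mono order_trans powr_ge_zero)

lemma branchwise_hoelder_loc_semi:
  assumes "bdd_above (loc_quots a G \<psi>)"
  shows "branchwise_hoelder a G (loc_semi a G \<psi>) \<psi>"
  unfolding branchwise_hoelder_def
proof (intro ballI)
  fix g x y
  assume g: "g \<in> G" and x: "x \<in> DeltaI" and y: "y \<in> DeltaI"
  show "norm (\<psi> (g x) - \<psi> (g y)) \<le> loc_semi a G \<psi> * \<bar>x - y\<bar> powr a"
  proof (cases "x = y")
    case False
    then have "norm (\<psi> (g x) - \<psi> (g y)) / \<bar>x - y\<bar> powr a \<in> loc_quots a G \<psi>"
      unfolding loc_quots_def using g x y by blast
    then have "norm (\<psi> (g x) - \<psi> (g y)) / \<bar>x - y\<bar> powr a \<le> loc_semi a G \<psi>"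
      unfolding loc_semi_def using assms by (rule cSup_upper)
    with False show ?thesis
      by (simp add: divide_le_eq)
  qed simp
qed

lemma loc_quots_nonempty:
  assumes "G \<noteq> {}"
  shows "loc_quots a G \<psi> \<noteq> {}"
proof -
  obtain g where "g \<in> G"
    using assms by blast
  then have "norm (\<psi> (g (1/4)) - \<psi> (g (3/4))) / \<bar>1/4 - 3/4\<bar> powr a \<in> loc_quots a G \<psi>"
    unfolding loc_quots_def
    by (intro CollectI exI[of _ g] exI[of _ "1/4"] exI[of _ "3/4"]) (simp add: DeltaI_def)
  then show ?thesis
    by blast
qed

lemma loc_semi_nonneg:
  assumes "G \<noteq> {}" "bdd_above (loc_quots a G \<psi>)"
  shows "0 \<le> loc_semi a G \<psi>"
proof -
  obtain q where "q \<in> loc_quots a G \<psi>"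
    using loc_quots_nonempty[OF assms(1)] by blast
  moreover have "0 \<le> q"
    using \<open>q \<in> loc_quots a G \<psi>\<close> by (auto simp: loc_quots_def)
  ultimately show ?thesis
    unfolding loc_semi_def using assms(2) by (meson cSup_upper order_trans)
qed

lemma loc_semi_le_of_branchwise_hoelder:
  assumes "G \<noteq> {}" "branchwise_hoelder a G c \<psi>"
  shows "bdd_above (loc_quots a G \<psi>)" "loc_semi a G \<psi> \<le> c"
proof -
  have le: "q \<le> c" if "q \<in> loc_quots a G \<psi>" for q
    using that assms(2)
    by (auto simp: loc_quots_def branchwise_hoelder_def divide_le_eq)
  then show "bdd_above (loc_quots a G \<psi>)"
    by (auto simp: bdd_above_def)
  show "loc_semi a G \<psi> \<le> c"
    unfolding loc_semi_def using loc_quots_nonempty[OF assms(1)] le by (rule cSup_least)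
qed

lemma norm_le_sup_norm: "bounded (\<psi> ` DeltaI) \<Longrightarrow> x \<in> DeltaI \<Longrightarrow> norm (\<psi> x) \<le> sup_norm \<psi>"
  unfolding sup_norm_def by (rule cSUP_upper) (auto simp: bounded_iff bdd_above_def)

lemma sup_norm_nonneg: "bounded (\<psi> ` DeltaI) \<Longrightarrow> 0 \<le> sup_norm \<psi>"
  using norm_le_sup_norm[of \<psi> "1/2"] by (simp add: DeltaI_def order_trans[OF norm_ge_zero])

lemma sup_norm_le: "(\<And>x. x \<in> DeltaI \<Longrightarrow> norm (\<psi> x) \<le> M) \<Longrightarrow> sup_norm \<psi> \<le> M"
  unfolding sup_norm_def by (rule cSUP_least) (auto simp: DeltaI_def)

section \<open>Partitions of the unit interval modulo null sets\<close>

lemma mod0_partition_memE: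
  assumes "mod0_partition P" "A \<in> P"
  obtains a b where "0 \<le> a" "a < b" "b \<le> 1" "A = {a<..<b}"
proof -
  have "is_open_interval A" "A \<subseteq> {0..1}"
    using assms unfolding mod0_partition_def by blast+
  then obtain a b where ab: "a < b" "A = {a<..<b}" "A \<subseteq> {0..1}"
    unfolding is_open_interval_def by blast
  then have "0 \<le> a" "b \<le> 1"
    using greaterThanLessThan_subseteq_atLeastAtMost_iff[of a b 0 1] by simp_all
  with ab that show ?thesis
    by blast
qed

lemma interval_eq_DeltaI_of_null_complement:
  assumes "0 \<le> a" "a < b" "b \<le> 1" "{0..1} - {a<..<b} \<in> null_sets lebesgue"
  shows "{a<..<b} = DeltaI"
proof -
  have not_negl: "\<not> negligible {c<..<d}" if "c < d" for c d :: real
    using negligible_interval(2)[of c d] that by simp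
  have negl: "negligible ({0..1} - {a<..<b})"
    using assms(4) by (simp add: negligible_iff_null_sets)
  have "a = 0"
  proof (rule ccontr)
    assume "a \<noteq> 0"
    then have "{0<..<a} \<subseteq> {0..1} - {a<..<b}" "0 < a"
      using assms(1-3) by auto
    then show False
      using negligible_subset[OF negl] not_negl by blast
  qed
  moreover have "b = 1"
  proof (rule ccontr)
    assume "b \<noteq> 1"
    then have "{b<..<1} \<subseteq> {0..1} - {a<..<b}" "b < 1"
      using assms(1-3) by auto
    then show False
      using negligible_subset[OF negl] not_negl by blast
  qed
  ultimately show ?thesis
    by (simp add: DeltaI_def)
qed

lemma mod0_partition_nonempty:
  assumes "mod0_partition P"
  shows "P \<noteq> {}"
proof
  assume "P = {}"
  then have "negligible (cbox 0 (1::real))"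
    using assms by (simp add: mod0_partition_def negligible_iff_null_sets)
  then show False
    using negligible_interval(1)[of 0 "1::real"] by (simp add: box_real)
qed

lemma mod0_partition_disjoint:
  "mod0_partition P \<Longrightarrow> A \<in> P \<Longrightarrow> B \<in> P \<Longrightarrow> A \<noteq> B \<Longrightarrow> A \<inter> B = {}"
  unfolding mod0_partition_def by blast

lemma mod0_partition_common_endpoint:
  assumes part: "mod0_partition P" and t: "t = 0 \<or> t = 1"
    and common: "\<And>A. A \<in> P \<Longrightarrow> t \<in> closure A"
  shows "P = {DeltaI}"
proof -
  have meet: "A \<inter> B \<noteq> {}" if A: "A \<in> P" and B: "B \<in> P" for A B
  proof -
    obtain a b where ab: "0 \<le> a" "a < b" "b \<le> 1" "A = {a<..<b}"
      using part A by (rule mod0_partition_memE)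
    obtain c d where cd: "0 \<le> c" "c < d" "d \<le> 1" "B = {c<..<d}"
      using part B by (rule mod0_partition_memE)
    have "t \<in> {a..b}" "t \<in> {c..d}"
      using common[OF A] common[OF B] ab cd by auto
    then have "(if t = 0 then min b d / 2 else (max a c + 1) / 2) \<in> A \<inter> B"
      using t ab cd by (auto simp: min_def max_def)
    then show ?thesis
      by blast
  qed
  obtain A0 where A0: "A0 \<in> P"
    using mod0_partition_nonempty[OF part] by blast
  have P: "P = {A0}"
    using A0 meet mod0_partition_disjoint[OF part] by blast
  obtain a b where ab: "0 \<le> a" "a < b" "b \<le> 1" "A0 = {a<..<b}"
    using part A0 by (rule mod0_partition_memE)
  have "{0..1} - {a<..<b} \<in> null_sets lebesgue"
    using part unfolding mod0_partition_def P ab(4) by simp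
  then have "A0 = DeltaI"
    using interval_eq_DeltaI_of_null_complement[OF ab(1-3)] ab(4) by simp
  then show ?thesis
    using P by simp
qed

section \<open>Inverse branches\<close>

(* Unfolding Hn (Suc n) into a set comprehension makes simp and auto blow up on goals about
   iterated branches; it is used through comp_in_inv_branches_n and inv_branches_n_SucE instead. *)
declare inv_branches_n.simps(2) [simp del]

locale inverse_branch_system =
  fixes P :: "real set set" and F :: "real \<Rightarrow> real" and C0 \<rho> :: real
  assumes part: "mod0_partition P"
    and full_branch: "\<forall>A\<in>P. bij_betw F A DeltaI"
    and C0_pos: "0 < C0" and rho: "0 < \<rho>" "\<rho> < 1"
    and h_diff: "\<forall>h\<in>inv_branches P F. \<forall>x\<in>DeltaI. h differentiable (at x) \<and> deriv h x \<noteq> 0"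
    and h_contr: "\<forall>n\<ge>1. \<forall>h\<in>inv_branches_n P F n. \<forall>x\<in>DeltaI. \<bar>deriv h x\<bar> \<le> C0 * \<rho> ^ n"
begin

abbreviation "H \<equiv> inv_branches P F"
abbreviation "Hn \<equiv> inv_branches_n P F"

lemma inv_branch_imageE:
  assumes "h \<in> H"
  obtains a b where "0 \<le> a" "a < b" "b \<le> 1" "{a<..<b} \<in> P" "h ` DeltaI = {a<..<b}"
proof -
  obtain A where A: "A \<in> P" "bij_betw h DeltaI A"
    using assms unfolding inv_branches_def by blast
  obtain a b where ab: "0 \<le> a" "a < b" "b \<le> 1" "A = {a<..<b}"
    using part A(1) by (rule mod0_partition_memE)
  have "h ` DeltaI = A"
    using A(2) by (simp add: bij_betw_def)
  with ab A(1) show ?thesis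
    using that[of a b] by simp
qed

lemma inv_branch_in_DeltaI:
  assumes "h \<in> H" "x \<in> DeltaI"
  shows "h x \<in> DeltaI"
proof -
  obtain a b where ab: "0 \<le> a" "b \<le> 1" "h ` DeltaI = {a<..<b}"
    using assms(1) by (rule inv_branch_imageE)
  then have "h x \<in> {a<..<b}"
    using assms(2) by blast
  with ab show ?thesis
    by (auto simp: DeltaI_def)
qed

lemma inv_branch_in_partition_elem:
  assumes "h \<in> H" "x \<in> DeltaI"
  shows "\<exists>A\<in>P. h x \<in> A"
proof -
  obtain a b where "{a<..<b} \<in> P" "h ` DeltaI = {a<..<b}"
    using assms(1) by (rule inv_branch_imageE)
  with assms(2) show ?thesis
    by blast
qed

lemma inv_branch_onto_partition_elem:
  assumes "A \<in> P"
  obtains h where "h \<in> H" "h ` DeltaI = A"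
proof -
  have bij: "bij_betw F A DeltaI"
    using full_branch assms by blast
  define h where "h = (\<lambda>x. if x \<in> DeltaI then inv_into A F x else 0)"
  have "bij_betw h DeltaI A"
    using bij_betw_inv_into[OF bij] by (rule bij_betw_cong[THEN iffD1, rotated]) (simp add: h_def)
  moreover have "\<forall>x\<in>DeltaI. F (h x) = x"
    using bij unfolding h_def bij_betw_def by (auto intro: f_inv_into_f)
  ultimately have "h \<in> H"
    using assms unfolding inv_branches_def h_def by auto
  with \<open>bij_betw h DeltaI A\<close> that show ?thesis
    by (simp add: bij_betw_def)
qed

lemma inv_branches_nonempty: "H \<noteq> {}"
  using mod0_partition_nonempty[OF part] inv_branch_onto_partition_elem by blast

lemma comp_in_inv_branches_n: "h \<in> H \<Longrightarrow> g \<in> Hn n \<Longrightarrow> h \<circ> g \<in> Hn (Suc n)"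
  unfolding inv_branches_n.simps(2) by blast

lemma inv_branches_n_SucE:
  assumes "g \<in> Hn (Suc n)"
  obtains h g' where "h \<in> H" "g' \<in> Hn n" "g = h \<circ> g'"
  using assms unfolding inv_branches_n.simps(2) by blast

lemma inv_branch_in_inv_branches_n_1:
  assumes "h \<in> H"
  shows "h \<in> Hn 1"
proof -
  \<comment> \<open>both sides vanish off DeltaI, since h does and 0 is not in DeltaI\<close>
  have "h \<circ> (\<lambda>x. if x \<in> DeltaI then x else 0) = h"
    using assms by (auto simp: fun_eq_iff inv_branches_def DeltaI_def)
  then show ?thesis
    using comp_in_inv_branches_n[OF assms, of "\<lambda>x. if x \<in> DeltaI then x else 0" 0] by simp
qed

lemma inv_branches_n_in_DeltaI_differentiable:
  "g \<in> Hn n \<Longrightarrow> x \<in> DeltaI \<Longrightarrow> g x \<in> DeltaI \<and> g differentiable (at x)"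
proof (induction n arbitrary: g)
  case 0
  have "((\<lambda>x. if x \<in> DeltaI then x else 0) has_derivative id) (at x)"
    using 0 by (intro has_derivative_transform_within_open[OF has_derivative_id, of DeltaI])
      (auto simp: DeltaI_def)
  with 0 show ?case
    by (auto simp: differentiable_def)
next
  case (Suc n)
  from Suc.prems(1) obtain h g' where hg: "h \<in> H" "g' \<in> Hn n" "g = h \<circ> g'"
    by (rule inv_branches_n_SucE)
  with Suc.IH Suc.prems(2) have "g' x \<in> DeltaI" "g' differentiable (at x)"
    by auto
  moreover have "g differentiable (at x)"
    unfolding hg(3) using hg(1) h_diff \<open>g' x \<in> DeltaI\<close>
    by (intro differentiable_chain_at \<open>g' differentiable (at x)\<close>) auto
  moreover have "g x \<in> DeltaI"
    using hg(1,3) \<open>g' x \<in> DeltaI\<close> inv_branch_in_DeltaI by simp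
  ultimately show ?case
    by blast
qed

lemma inv_branches_n_lipschitz:
  assumes "1 \<le> n" "g \<in> Hn n" "x \<in> DeltaI" "y \<in> DeltaI"
  shows "\<bar>g x - g y\<bar> \<le> C0 * \<rho> ^ n * \<bar>x - y\<bar>"
  by (rule abs_diff_le_of_deriv_bound[OF convex_DeltaI])
    (use assms h_contr inv_branches_n_in_DeltaI_differentiable in auto)

lemma inv_branch_lipschitz:
  "h \<in> H \<Longrightarrow> x \<in> DeltaI \<Longrightarrow> y \<in> DeltaI \<Longrightarrow> \<bar>h x - h y\<bar> \<le> C0 * \<rho> * \<bar>x - y\<bar>"
  using inv_branches_n_lipschitz[of 1 h x y] inv_branch_in_inv_branches_n_1 by simp

lemma inv_branches_n_powr_lipschitz:
  assumes "0 \<le> a" "1 \<le> n" "g \<in> Hn n" "x \<in> DeltaI" "y \<in> DeltaI"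
  shows "\<bar>g x - g y\<bar> powr a \<le> C0 powr a * (\<rho> powr a) ^ n * \<bar>x - y\<bar> powr a"
proof -
  have "\<bar>g x - g y\<bar> powr a \<le> (C0 * \<rho> ^ n * \<bar>x - y\<bar>) powr a"
    using inv_branches_n_lipschitz[OF assms(2-5)] assms(1) by (intro powr_mono2) auto
  also have "\<dots> = C0 powr a * (\<rho> powr a) ^ n * \<bar>x - y\<bar> powr a"
    using C0_pos rho
    by (simp add: powr_mult powr_realpow[symmetric] powr_powr powr_power mult.commute)
  finally show ?thesis .
qed

(* Iterating an onto branch gives onto n-fold branches, which cannot contract by C0 rho^n < 1/2. *)
lemma inv_branch_not_onto:
  assumes h: "h \<in> H"
  shows "h ` DeltaI \<noteq> DeltaI"
proof
  assume onto: "h ` DeltaI = DeltaI"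
  define g where "g n = (h ^^ n) \<circ> (\<lambda>x. if x \<in> DeltaI then x else 0)" for n
  have g: "g n \<in> Hn n \<and> g n ` DeltaI = DeltaI" for n
  proof (induction n)
    case 0
    show ?case
      by (force simp: g_def)
  next
    case (Suc n)
    have "g (Suc n) = h \<circ> g n"
      by (simp add: g_def comp_assoc)
    moreover have "(h \<circ> g n) ` DeltaI = DeltaI"
      using Suc onto by (metis image_comp)
    ultimately show ?case
      using Suc h comp_in_inv_branches_n by metis
  qed
  obtain n where "\<rho> ^ n < 1 / (2 * C0)"
    using real_arch_pow_inv[of "1 / (2 * C0)" \<rho>] C0_pos rho by auto
  then have "C0 * \<rho> ^ n < 1 / 2"
    using C0_pos by (simp add: field_simps)
  moreover have "C0 * \<rho> ^ Suc n \<le> C0 * \<rho> ^ n"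
    using rho C0_pos by (intro mult_left_mono) (simp_all add: power_decreasing)
  ultimately have small: "C0 * \<rho> ^ Suc n < 1 / 2"
    by linarith
  have "1/4 \<in> DeltaI" "3/4 \<in> DeltaI"
    by (simp_all add: DeltaI_def)
  then obtain x y where xy: "x \<in> DeltaI" "y \<in> DeltaI" "g (Suc n) x = 1/4" "g (Suc n) y = 3/4"
    using g[of "Suc n"] by (metis imageE)
  have "g (Suc n) \<in> Hn (Suc n)"
    using g by blast
  then have "\<bar>g (Suc n) x - g (Suc n) y\<bar> \<le> C0 * \<rho> ^ Suc n * \<bar>x - y\<bar>"
    using xy(1,2) by (rule inv_branches_n_lipschitz[rotated]) simp
  also have "\<dots> \<le> C0 * \<rho> ^ Suc n"
    using xy(1,2) C0_pos rho by (intro mult_left_le) (auto simp: DeltaI_def)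
  finally have "1 / 2 \<le> C0 * \<rho> ^ Suc n"
    using xy(3,4) by simp
  with small show False
    by linarith
qed

lemma inv_branch_extension:
  assumes h: "h \<in> H"
  obtains hb a b where "continuous_on {0..1} hb" "\<forall>x\<in>DeltaI. hb x = h x"
    "0 \<le> a" "a < b" "b \<le> 1" "h ` DeltaI = {a<..<b}" "hb ` {0..1} \<subseteq> {a..b}" "{hb 0, hb 1} = {a, b}"
proof -
  obtain a b where ab: "0 \<le> a" "a < b" "b \<le> 1" "h ` DeltaI = {a<..<b}"
    using h by (rule inv_branch_imageE)
  have "hoelder_on 1 DeltaI h"
    unfolding hoelder_on_def using inv_branch_lipschitz[OF h] ab(4) by auto
  then obtain hb where hb: "continuous_on {0..1} hb" "\<And>x. x \<in> DeltaI \<Longrightarrow> hb x = h x"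
    using hoelder_on_imp_uniformly_continuous_on continuous_extension_from_DeltaI
    by (metis zero_less_one)
  have img: "hb ` DeltaI = {a<..<b}"
    using ab(4) hb(2) by (simp cong: image_cong)
  have sub: "hb ` {0..1} \<subseteq> {a..b}"
    using hb(1) img by (intro image_closure_subset[of DeltaI, simplified]) auto
  have "compact (hb ` {0..1})"
    using hb(1) by (intro compact_continuous_image) auto
  then have "closure (hb ` DeltaI) \<subseteq> hb ` {0..1}"
    using DeltaI_subset_unit_interval by (intro closure_minimal image_mono compact_imp_closed)
  then have "{a, b} \<subseteq> hb ` {0..1}"
    using img ab(2) by auto
  moreover have "x \<in> {hb 0, hb 1}" if x_img: "x \<in> hb ` {0..1}" and x_out: "x \<notin> {a<..<b}" for x
  proof -
    obtain y where y: "y \<in> {0..1}" "x = hb y"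
      using x_img by blast
    then have "y \<notin> DeltaI"
      using x_out img by blast
    then have "y = 0 \<or> y = 1"
      using y(1) by (auto simp: DeltaI_def)
    then show ?thesis
      using y(2) by auto
  qed
  ultimately have "{a, b} \<subseteq> {hb 0, hb 1}"
    by auto
  with sub ab(2) have "{hb 0, hb 1} = {a, b}"
    by auto
  then show ?thesis
    by (rule that[of hb a b, rotated -1]) (use hb ab sub in auto)
qed

(* An extended branch maps {0, 1} onto the endpoints of its partition interval.  Invariance of
   {0, 1} therefore forces a full branch, and invariance of a single endpoint t makes t an endpoint
   of every partition interval, which leaves only the trivial partition. *)
lemma invariant_endpoint_set_empty:
  assumes Z: "Z \<subseteq> {0, 1}"
    and inv: "\<And>h hb. h \<in> H \<Longrightarrow> continuous_on {0..1} hb \<Longrightarrow> \<forall>x\<in>DeltaI. hb x = h x \<Longrightarrow>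
                hb ` {0..1} \<subseteq> {0..1} \<Longrightarrow> hb ` Z \<subseteq> Z"
  shows "Z = {}"
proof (rule ccontr)
  assume "Z \<noteq> {}"
  show False
  proof (cases "Z = {0, 1}")
    case True
    obtain h where h: "h \<in> H"
      using inv_branches_nonempty by blast
    obtain hb a b where hb: "continuous_on {0..1} hb" "\<forall>x\<in>DeltaI. hb x = h x"
        "0 \<le> a" "a < b" "b \<le> 1" "h ` DeltaI = {a<..<b}" "hb ` {0..1} \<subseteq> {a..b}" "{hb 0, hb 1} = {a, b}"
      using h by (rule inv_branch_extension)
    have "hb ` {0..1} \<subseteq> {0..1}"
      using hb(3,5,7) by auto
    then have "{hb 0, hb 1} \<subseteq> Z"
      using inv[OF h hb(1,2)] True by auto
    then have "{a, b} \<subseteq> {0, 1}"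
      using hb(8) True by simp
    then have "h ` DeltaI = DeltaI"
      using hb(4,6) by (auto simp: DeltaI_def doubleton_eq_iff)
    with inv_branch_not_onto[OF h] show False ..
  next
    case False
    then obtain t where t: "Z = {t}" "t = 0 \<or> t = 1"
      using Z \<open>Z \<noteq> {}\<close> by blast
    have "t \<in> closure A" if "A \<in> P" for A
    proof -
      obtain h where h: "h \<in> H" "h ` DeltaI = A"
        using \<open>A \<in> P\<close> by (rule inv_branch_onto_partition_elem)
      obtain hb a b where hb: "continuous_on {0..1} hb" "\<forall>x\<in>DeltaI. hb x = h x"
          "0 \<le> a" "a < b" "b \<le> 1" "h ` DeltaI = {a<..<b}" "hb ` {0..1} \<subseteq> {a..b}" "{hb 0, hb 1} = {a, b}"
        using h(1) by (rule inv_branch_extension)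
      have "hb ` {0..1} \<subseteq> {0..1}"
        using hb(3,5,7) by auto
      then have "hb t = t"
        using inv[OF h(1) hb(1,2)] t(1) by auto
      then have "t \<in> {hb 0, hb 1}"
        using t(2) by auto
      then have "t \<in> {a, b}"
        using hb(8) by simp
      then show ?thesis
        using h(2) hb(4,6) by auto
    qed
    then have "P = {DeltaI}"
      using mod0_partition_common_endpoint[OF part t(2)] by blast
    then obtain h where "h \<in> H" "h ` DeltaI = DeltaI"
      using inv_branch_onto_partition_elem by blast
    with inv_branch_not_onto show False
      by blast
  qed
qed

lemma bounded_below_of_subinvariant:
  fixes g :: "real \<Rightarrow> real"
  assumes g_cont: "continuous_on {0..1} g"
    and g_pos: "\<And>x. x \<in> DeltaI \<Longrightarrow> 0 < g x"
    and sub: "\<And>h. h \<in> H \<Longrightarrow> \<exists>\<kappa>>0. \<forall>x\<in>DeltaI. \<kappa> * g (h x) \<le> g x"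
  shows "\<exists>m>0. \<forall>x\<in>DeltaI. m \<le> g x"
proof -
  define Z where "Z = {t \<in> {0..1}. g t = 0}"
  have g_nonneg: "0 \<le> g t" if "t \<in> {0..1}" for t
    using continuous_le_on_unit_interval[OF continuous_on_const g_cont _ that] g_pos
    by (simp add: less_imp_le)
  have "Z \<subseteq> {0, 1}"
  proof
    fix t
    assume "t \<in> Z"
    then have "t \<in> {0..1}" "t \<notin> DeltaI"
      using g_pos[of t] by (auto simp: Z_def)
    then show "t \<in> {0, 1}"
      by (auto simp: DeltaI_def)
  qed
  moreover have "hb ` Z \<subseteq> Z"
    if h: "h \<in> H" and hb_cont: "continuous_on {0..1} hb"
      and hb_eq: "\<forall>x\<in>DeltaI. hb x = h x" and hb_range: "hb ` {0..1} \<subseteq> {0..1}" for h hb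
  proof (rule image_subsetI)
    fix t
    assume t: "t \<in> Z"
    obtain \<kappa> where \<kappa>: "0 < \<kappa>" "\<forall>x\<in>DeltaI. \<kappa> * g (h x) \<le> g x"
      using sub[OF h] by blast
    have "continuous_on {0..1} (\<lambda>x. \<kappa> * g (hb x))"
      by (intro continuous_intros continuous_on_compose2[OF g_cont hb_cont hb_range])
    then have "\<kappa> * g (hb t) \<le> g t"
      using continuous_le_on_unit_interval[OF _ g_cont _, of "\<lambda>x. \<kappa> * g (hb x)" t] \<kappa>(2) hb_eq t
      by (simp add: Z_def)
    moreover have "hb t \<in> {0..1}"
      using t hb_range by (auto simp: Z_def image_subset_iff)
    ultimately show "hb t \<in> Z"
      using t \<kappa>(1) g_nonneg[of "hb t"] by (simp add: Z_def mult_le_0_iff)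
  qed
  ultimately have "Z = {}"
    by (rule invariant_endpoint_set_empty)
  obtain t0 where t0: "t0 \<in> {0..1}" "\<And>t. t \<in> {0..1} \<Longrightarrow> g t0 \<le> g t"
    using continuous_attains_inf[OF compact_Icc _ g_cont] by auto
  have "0 < g t0"
    using \<open>Z = {}\<close> g_nonneg[OF t0(1)] t0(1) by (auto simp: Z_def)
  with t0 show ?thesis
    using DeltaI_subset_unit_interval by blast
qed

end

section \<open>The normalised transfer operator\<close>

locale normalised_transfer_operator = inverse_branch_system P F C0 \<rho>
  for P :: "real set set" and F :: "real \<Rightarrow> real" and C0 \<rho> :: real +
  fixes \<alpha> \<epsilon>1 :: real and r lam :: "real \<Rightarrow> real" and f :: "real \<Rightarrow> real \<Rightarrow> real"
  assumes alpha: "0 < \<alpha>" "\<alpha> \<le> 1"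
    and h_dist: "\<forall>h\<in>inv_branches P F. \<forall>x\<in>DeltaI. \<forall>y\<in>DeltaI.
                   \<bar>ln \<bar>deriv h x\<bar> - ln \<bar>deriv h y\<bar>\<bar> \<le> C0 * \<bar>x - y\<bar> powr \<alpha>"
    and r_diff: "\<forall>A\<in>P. \<forall>x\<in>A. r differentiable (at x)"
    and r_h: "\<forall>h\<in>inv_branches P F. \<forall>x\<in>DeltaI. \<bar>deriv (r \<circ> h) x\<bar> \<le> C0"
    and eps1: "0 < \<epsilon>1"
    and eigen: "\<forall>\<sigma>. \<bar>\<sigma>\<bar> < \<epsilon>1 \<longrightarrow> lam \<sigma> > 0 \<and> (\<forall>x\<in>DeltaI. f \<sigma> x > 0)
                  \<and> hoelder_on \<alpha> DeltaI (f \<sigma>)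
                  \<and> (\<forall>x\<in>DeltaI. Ptr P F r (complex_of_real \<sigma>) (\<lambda>y. complex_of_real (f \<sigma> y)) x
                                  = complex_of_real (lam \<sigma> * f \<sigma> x))"
    and lam0: "lam 0 = 1"
    and f_ge_half: "\<forall>\<sigma>. \<bar>\<sigma>\<bar> < \<epsilon>1 \<longrightarrow> (\<forall>x\<in>DeltaI. f 0 x / 2 \<le> f \<sigma> x)"
    and f_semi_le: "\<forall>\<sigma>. \<bar>\<sigma>\<bar> < \<epsilon>1 \<longrightarrow> hoelder_semi \<alpha> DeltaI (f \<sigma>) \<le> 2 * hoelder_semi \<alpha> DeltaI (f 0)"
begin

lemma lam_pos: "\<bar>\<sigma>\<bar> < \<epsilon>1 \<Longrightarrow> 0 < lam \<sigma>"
  using eigen by blast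

lemma f_pos: "\<bar>\<sigma>\<bar> < \<epsilon>1 \<Longrightarrow> x \<in> DeltaI \<Longrightarrow> 0 < f \<sigma> x"
  using eigen by blast

lemma r_comp_lipschitz:
  assumes "h \<in> H" "x \<in> DeltaI" "y \<in> DeltaI"
  shows "\<bar>r (h x) - r (h y)\<bar> \<le> C0 * \<bar>x - y\<bar>"
proof -
  have "(r \<circ> h) differentiable (at z)" if "z \<in> DeltaI" for z
  proof (rule differentiable_chain_at)
    show "h differentiable (at z)"
      using h_diff assms(1) that by blast
    show "r differentiable (at (h z))"
      using inv_branch_in_partition_elem[OF assms(1) that] r_diff by blast
  qed
  then have "\<bar>(r \<circ> h) x - (r \<circ> h) y\<bar> \<le> C0 * \<bar>x - y\<bar>"
    using abs_diff_le_of_deriv_bound[OF convex_DeltaI, of "r \<circ> h" C0 x y] assms r_h by blast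
  then show ?thesis
    by simp
qed

lemma deriv_distortion:
  assumes h: "h \<in> H" and x: "x \<in> DeltaI" and y: "y \<in> DeltaI"
  shows "exp (- C0) * \<bar>deriv h y\<bar> \<le> \<bar>deriv h x\<bar>"
proof -
  have pos: "0 < \<bar>deriv h x\<bar>" "0 < \<bar>deriv h y\<bar>"
    using h_diff h x y by auto
  have "\<bar>x - y\<bar> powr \<alpha> \<le> 1"
    using x y alpha by (intro powr_le1) (auto simp: DeltaI_def)
  then have "ln \<bar>deriv h y\<bar> - C0 \<le> ln \<bar>deriv h x\<bar>"
    using h_dist h x y C0_pos by (smt (verit) mult_left_le)
  then have "exp (ln \<bar>deriv h y\<bar> - C0) \<le> \<bar>deriv h x\<bar>"
    using pos by (metis exp_le_cancel_iff exp_ln)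
  then show ?thesis
    using pos by (simp add: exp_diff exp_minus field_simps)
qed

definition f_hoelder_const :: real where
  "f_hoelder_const = 2 * hoelder_semi \<alpha> DeltaI (f 0)"

lemma f_hoelder_const_nonneg: "0 \<le> f_hoelder_const"
proof -
  have "hoelder_on \<alpha> DeltaI (f 0)"
    using eigen eps1 by simp
  then have "0 \<le> hoelder_semi \<alpha> DeltaI (f 0)"
    by (rule hoelder_semi_nonneg[of _ _ _ "1/4" "3/4"]) (simp_all add: DeltaI_def)
  then show ?thesis
    by (simp add: f_hoelder_const_def)
qed

lemma f_hoelder:
  assumes "\<bar>\<sigma>\<bar> < \<epsilon>1" "x \<in> DeltaI" "y \<in> DeltaI"
  shows "\<bar>f \<sigma> x - f \<sigma> y\<bar> \<le> f_hoelder_const * \<bar>x - y\<bar> powr \<alpha>"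
proof -
  have "hoelder_on \<alpha> DeltaI (f \<sigma>)"
    using eigen assms(1) by blast
  then have "\<bar>f \<sigma> x - f \<sigma> y\<bar> \<le> hoelder_semi \<alpha> DeltaI (f \<sigma>) * \<bar>x - y\<bar> powr \<alpha>"
    using norm_diff_le_hoelder_semi assms(2,3) by fastforce
  also have "\<dots> \<le> f_hoelder_const * \<bar>x - y\<bar> powr \<alpha>"
    using f_semi_le assms(1) by (intro mult_right_mono) (simp_all add: f_hoelder_const_def)
  finally show ?thesis .
qed

definition branch_weight :: "real \<Rightarrow> real \<Rightarrow> (real \<Rightarrow> real) \<Rightarrow> real" where
  "branch_weight \<sigma> u h = exp (- \<sigma> * r (h u)) * \<bar>deriv h u\<bar> * f \<sigma> (h u) / (lam \<sigma> * f \<sigma> u)"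

lemma branch_weight_pos:
  assumes "\<bar>\<sigma>\<bar> < \<epsilon>1" "h \<in> H" "u \<in> DeltaI"
  shows "0 < branch_weight \<sigma> u h"
  using assms h_diff lam_pos f_pos inv_branch_in_DeltaI
  unfolding branch_weight_def by (simp add: zero_less_mult_iff)

lemma branch_weight_has_sum:
  assumes s: "\<bar>\<sigma>\<bar> < \<epsilon>1" and u: "u \<in> DeltaI"
  shows "(branch_weight \<sigma> u has_sum 1) H"
proof -
  define c where "c = lam \<sigma> * f \<sigma> u"
  have c: "0 < c"
    using lam_pos[OF s] f_pos[OF s u] by (simp add: c_def)
  define g where "g h = complex_of_real (c * branch_weight \<sigma> u h)" for h
  have "g = (\<lambda>h. exp (- (complex_of_real \<sigma> * complex_of_real (r (h u))))
      * complex_of_real \<bar>deriv h u\<bar> * complex_of_real (f \<sigma> (h u)))"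
    using lam_pos[OF s] f_pos[OF s u]
    by (simp add: fun_eq_iff g_def branch_weight_def c_def exp_of_real[symmetric])
  then have "infsum g H = Ptr P F r (complex_of_real \<sigma>) (\<lambda>y. complex_of_real (f \<sigma> y)) u"
    by (simp add: Ptr_def)
  also have "\<dots> = complex_of_real c"
    using eigen s u by (simp add: c_def)
  finally have "infsum g H = complex_of_real c" .
  \<comment> \<open>a non-summable family has infsum 0, so the nonzero value certifies summability\<close>
  then have "(g has_sum complex_of_real c) H"
    using c by (metis has_sum_infsum infsum_not_exists of_real_eq_0_iff less_irrefl)
  then have "((\<lambda>h. c * branch_weight \<sigma> u h) has_sum c) H"
    unfolding g_def by (simp only: has_sum_of_real_iff)
  then have "((\<lambda>h. c * branch_weight \<sigma> u h / c) has_sum (c / c)) H"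
    by (rule has_sum_divide_const)
  then show ?thesis
    using c by simp
qed

lemma branch_weight_le_one:
  assumes "\<bar>\<sigma>\<bar> < \<epsilon>1" "u \<in> DeltaI" "h \<in> H"
  shows "branch_weight \<sigma> u h \<le> 1"
  using has_sum_mono_neutral[OF has_sum_finite[of "{h}"] branch_weight_has_sum[OF assms(1,2)]]
    branch_weight_pos[OF assms(1) _ assms(2)] assms(3) by force

lemma f0_bounded_below: "\<exists>m>0. \<forall>x\<in>DeltaI. m \<le> f 0 x"
proof -
  have s0: "\<bar>0::real\<bar> < \<epsilon>1"
    using eps1 by simp
  have "hoelder_on \<alpha> DeltaI (f 0)"
    using eigen s0 by blast
  then obtain g where g: "continuous_on {0..1} g" "\<And>x. x \<in> DeltaI \<Longrightarrow> g x = f 0 x"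
    using hoelder_on_imp_uniformly_continuous_on[OF alpha(1)] continuous_extension_from_DeltaI
    by metis
  have "\<exists>\<kappa>>0. \<forall>x\<in>DeltaI. \<kappa> * g (h x) \<le> g x" if h: "h \<in> H" for h
  proof (intro exI conjI ballI)
    have half: "1/2 \<in> DeltaI"
      by (simp add: DeltaI_def)
    show "0 < exp (- C0) * \<bar>deriv h (1/2)\<bar>"
      using h_diff h half by simp
    fix x
    assume x: "x \<in> DeltaI"
    have hx: "h x \<in> DeltaI"
      using h x by (rule inv_branch_in_DeltaI)
    have "exp (- C0) * \<bar>deriv h (1/2)\<bar> * f 0 (h x) \<le> \<bar>deriv h x\<bar> * f 0 (h x)"
      using deriv_distortion[OF h x half] f_pos[OF s0 hx] by (intro mult_right_mono) auto
    also have "\<dots> = f 0 x * branch_weight 0 x h"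
      using f_pos[OF s0 x] by (simp add: branch_weight_def lam0)
    also have "\<dots> \<le> f 0 x"
      using branch_weight_le_one[OF s0 x h] f_pos[OF s0 x] by (simp add: mult_le_cancel_left1)
    finally show "exp (- C0) * \<bar>deriv h (1/2)\<bar> * g (h x) \<le> g x"
      using g(2) x hx by simp
  qed
  then obtain m where "0 < m" "\<forall>x\<in>DeltaI. m \<le> g x"
    using bounded_below_of_subinvariant[OF g(1)] g(2) f_pos[OF s0] by metis
  with g(2) show ?thesis
    by auto
qed

definition f_inf :: real where
  "f_inf = Inf (f 0 ` DeltaI)"

lemma f_inf_pos: "0 < f_inf"
proof -
  obtain m where m: "0 < m" "\<forall>x\<in>DeltaI. m \<le> f 0 x"
    using f0_bounded_below by blast
  have "m \<le> f_inf"
    unfolding f_inf_def using m(2) by (intro cINF_greatest) (auto simp: DeltaI_def)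
  with m(1) show ?thesis
    by linarith
qed

lemma f_lower_bound:
  assumes "\<bar>\<sigma>\<bar> < \<epsilon>1" "x \<in> DeltaI"
  shows "f_inf / 2 \<le> f \<sigma> x"
proof -
  have "bdd_below (f 0 ` DeltaI)"
    using f_pos[of 0] eps1 by (intro bdd_belowI2[where m = 0]) (simp add: less_imp_le)
  then have "f_inf \<le> f 0 x"
    unfolding f_inf_def using assms(2) by (rule cINF_lower)
  then show ?thesis
    using f_ge_half assms by fastforce
qed

lemma ln_f_hoelder:
  assumes "\<bar>\<sigma>\<bar> < \<epsilon>1" "x \<in> DeltaI" "y \<in> DeltaI"
  shows "\<bar>ln (f \<sigma> x) - ln (f \<sigma> y)\<bar> \<le> 2 * f_hoelder_const / f_inf * \<bar>x - y\<bar> powr \<alpha>"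
proof -
  have "\<bar>ln (f \<sigma> x) - ln (f \<sigma> y)\<bar> \<le> \<bar>f \<sigma> x - f \<sigma> y\<bar> / (f_inf / 2)"
    using f_inf_pos f_lower_bound assms by (intro abs_ln_diff_le) auto
  also have "\<dots> \<le> f_hoelder_const * \<bar>x - y\<bar> powr \<alpha> / (f_inf / 2)"
    using f_hoelder[OF assms] f_inf_pos by (intro divide_right_mono) auto
  finally show ?thesis
    by (simp add: field_simps)
qed

(* The four terms of ln (branch_weight sigma u h) contribute C0 (from r o h), C0 (distortion of h')
   and 2 f_hoelder_const / f_inf for ln f_sigma at u and at h u, the latter with the factor
   (C0 rho)^alpha from the contraction of h. *)
definition log_weight_const :: real where
  "log_weight_const = 2 * C0 + 2 * f_hoelder_const / f_inf * ((C0 * \<rho>) powr \<alpha> + 1)"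

lemma log_weight_const_nonneg: "0 \<le> log_weight_const"
  unfolding log_weight_const_def
  using C0_pos f_inf_pos f_hoelder_const_nonneg by simp

lemma branch_weight_log_hoelder:
  assumes s: "\<bar>\<sigma>\<bar> < \<epsilon>1" "\<bar>\<sigma>\<bar> \<le> 1" and h: "h \<in> H" and u: "u \<in> DeltaI" and v: "v \<in> DeltaI"
  shows "\<bar>ln (branch_weight \<sigma> v h) - ln (branch_weight \<sigma> u h)\<bar> \<le> log_weight_const * \<bar>u - v\<bar> powr \<alpha>"
proof -
  have hu: "h u \<in> DeltaI" and hv: "h v \<in> DeltaI"
    using h u v by (simp_all add: inv_branch_in_DeltaI)
  define d where "d = \<bar>u - v\<bar> powr \<alpha>"
  have "\<bar>u - v\<bar> \<le> d"
    unfolding d_def using u v alpha by (intro self_le_powr) (auto simp: DeltaI_def)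
  have ln_weight: "ln (branch_weight \<sigma> w h)
      = - \<sigma> * r (h w) + ln \<bar>deriv h w\<bar> + ln (f \<sigma> (h w)) - ln (lam \<sigma>) - ln (f \<sigma> w)"
    if "w \<in> DeltaI" for w
    using that h_diff h lam_pos[OF s(1)] f_pos[OF s(1) that]
      f_pos[OF s(1) inv_branch_in_DeltaI[OF h that]]
    by (simp add: branch_weight_def ln_mult ln_div)
  have "\<bar>\<sigma> * r (h v) - \<sigma> * r (h u)\<bar> \<le> 1 * (C0 * \<bar>v - u\<bar>)"
    unfolding right_diff_distrib[symmetric] abs_mult
    using s(2) r_comp_lipschitz[OF h v u] by (intro mult_mono) auto
  also have "\<dots> \<le> C0 * d"
    using \<open>\<bar>u - v\<bar> \<le> d\<close> C0_pos by (simp add: abs_minus_commute)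
  finally have r_term: "\<bar>\<sigma> * r (h v) - \<sigma> * r (h u)\<bar> \<le> C0 * d" .
  have deriv_term: "\<bar>ln \<bar>deriv h v\<bar> - ln \<bar>deriv h u\<bar>\<bar> \<le> C0 * d"
    using h_dist h u v unfolding d_def by (simp add: abs_minus_commute)
  have "\<bar>h v - h u\<bar> powr \<alpha> \<le> (C0 * \<rho> * \<bar>v - u\<bar>) powr \<alpha>"
    using inv_branch_lipschitz[OF h v u] alpha by (intro powr_mono2) auto
  also have "\<dots> = (C0 * \<rho>) powr \<alpha> * d"
    unfolding d_def using C0_pos rho by (simp add: powr_mult abs_minus_commute)
  finally have "\<bar>h v - h u\<bar> powr \<alpha> \<le> (C0 * \<rho>) powr \<alpha> * d" .
  then have "2 * f_hoelder_const / f_inf * \<bar>h v - h u\<bar> powr \<alpha>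
      \<le> 2 * f_hoelder_const / f_inf * ((C0 * \<rho>) powr \<alpha> * d)"
    using f_hoelder_const_nonneg f_inf_pos by (intro mult_left_mono) auto
  then have "\<bar>ln (f \<sigma> (h v)) - ln (f \<sigma> (h u))\<bar> \<le> 2 * f_hoelder_const / f_inf * ((C0 * \<rho>) powr \<alpha> * d)"
    using ln_f_hoelder[OF s(1) hv hu] by linarith
  moreover have "\<bar>ln (f \<sigma> v) - ln (f \<sigma> u)\<bar> \<le> 2 * f_hoelder_const / f_inf * d"
    using ln_f_hoelder[OF s(1) v u] unfolding d_def by (simp add: abs_minus_commute)
  moreover have "ln (branch_weight \<sigma> v h) - ln (branch_weight \<sigma> u h)
      = - (\<sigma> * r (h v) - \<sigma> * r (h u)) + (ln \<bar>deriv h v\<bar> - ln \<bar>deriv h u\<bar>)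
        + (ln (f \<sigma> (h v)) - ln (f \<sigma> (h u))) - (ln (f \<sigma> v) - ln (f \<sigma> u))"
    using ln_weight[OF u] ln_weight[OF v] by linarith
  ultimately have "\<bar>ln (branch_weight \<sigma> v h) - ln (branch_weight \<sigma> u h)\<bar>
      \<le> C0 * d + C0 * d + 2 * f_hoelder_const / f_inf * ((C0 * \<rho>) powr \<alpha> * d)
        + 2 * f_hoelder_const / f_inf * d"
    using r_term deriv_term by arith
  also have "\<dots> = log_weight_const * d"
    by (simp add: log_weight_const_def algebra_simps add_divide_distrib)
  finally show ?thesis
    unfolding d_def .
qed

lemma branch_weight_hoelder:
  assumes s: "\<bar>\<sigma>\<bar> < \<epsilon>1" "\<bar>\<sigma>\<bar> \<le> 1" and h: "h \<in> H" and u: "u \<in> DeltaI" and v: "v \<in> DeltaI"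
  shows "\<bar>branch_weight \<sigma> v h - branch_weight \<sigma> u h\<bar>
           \<le> log_weight_const * exp log_weight_const * branch_weight \<sigma> u h * \<bar>u - v\<bar> powr \<alpha>"
    and "branch_weight \<sigma> v h \<le> exp log_weight_const * branch_weight \<sigma> u h"
proof -
  define d where "d = log_weight_const * \<bar>u - v\<bar> powr \<alpha>"
  have "\<bar>u - v\<bar> powr \<alpha> \<le> 1"
    using u v alpha by (intro powr_le1) (auto simp: DeltaI_def)
  then have "d \<le> log_weight_const"
    unfolding d_def using log_weight_const_nonneg by (simp add: mult_left_le)
  have pos: "0 < branch_weight \<sigma> v h" "0 < branch_weight \<sigma> u h"
    using branch_weight_pos s(1) h u v by auto
  have ln: "\<bar>ln (branch_weight \<sigma> v h) - ln (branch_weight \<sigma> u h)\<bar> \<le> d"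
    unfolding d_def by (rule branch_weight_log_hoelder[OF s h u v])
  have "\<bar>branch_weight \<sigma> v h - branch_weight \<sigma> u h\<bar> \<le> d * exp d * branch_weight \<sigma> u h"
    by (rule abs_diff_le_of_abs_ln_diff_le(1)[OF pos ln])
  also have "\<dots> \<le> d * exp log_weight_const * branch_weight \<sigma> u h"
    using \<open>d \<le> log_weight_const\<close> pos(2) ln
    by (intro mult_right_mono mult_left_mono) auto
  finally show "\<bar>branch_weight \<sigma> v h - branch_weight \<sigma> u h\<bar>
      \<le> log_weight_const * exp log_weight_const * branch_weight \<sigma> u h * \<bar>u - v\<bar> powr \<alpha>"
    by (simp add: d_def algebra_simps)
  have "branch_weight \<sigma> v h \<le> exp d * branch_weight \<sigma> u h"
    by (rule abs_diff_le_of_abs_ln_diff_le(2)[OF pos ln])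
  also have "\<dots> \<le> exp log_weight_const * branch_weight \<sigma> u h"
    using \<open>d \<le> log_weight_const\<close> pos(2) by (intro mult_right_mono) auto
  finally show "branch_weight \<sigma> v h \<le> exp log_weight_const * branch_weight \<sigma> u h" .
qed

definition complex_weight :: "complex \<Rightarrow> real \<Rightarrow> (real \<Rightarrow> real) \<Rightarrow> complex" where
  "complex_weight s u h = cis (- (Im s * r (h u))) * complex_of_real (branch_weight (Re s) u h)"

lemma norm_complex_weight:
  "\<bar>Re s\<bar> < \<epsilon>1 \<Longrightarrow> h \<in> H \<Longrightarrow> u \<in> DeltaI \<Longrightarrow> norm (complex_weight s u h) = branch_weight (Re s) u h"
  using branch_weight_pos[of "Re s" h u] by (simp add: complex_weight_def norm_mult)

definition weight_const :: real where
  "weight_const = exp log_weight_const * (log_weight_const + 2 * C0 powr \<alpha>)"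

lemma weight_const_nonneg: "0 \<le> weight_const"
  using log_weight_const_nonneg by (simp add: weight_const_def)

lemma complex_weight_hoelder:
  assumes s: "\<bar>Re s\<bar> < \<epsilon>1" "\<bar>Re s\<bar> \<le> 1" and h: "h \<in> H" and u: "u \<in> DeltaI" and v: "v \<in> DeltaI"
  shows "norm (complex_weight s u h - complex_weight s v h)
           \<le> weight_const * (1 + \<bar>Im s\<bar> powr \<alpha>) * branch_weight (Re s) u h * \<bar>u - v\<bar> powr \<alpha>"
proof -
  define K where "K = log_weight_const"
  define B where "B = \<bar>Im s\<bar> powr \<alpha>"
  define d where "d = \<bar>u - v\<bar> powr \<alpha>"
  define cu cv where "cu = cis (- (Im s * r (h u)))" and "cv = cis (- (Im s * r (h v)))"
  define wu wv where "wu = branch_weight (Re s) u h" and "wv = branch_weight (Re s) v h"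
  have wu: "0 < wu" and wv: "0 < wv"
    unfolding wu_def wv_def using branch_weight_pos s(1) h u v by blast+
  have K: "0 \<le> K" "0 \<le> B" "0 \<le> d"
    using log_weight_const_nonneg by (simp_all add: K_def B_def d_def)
  have "norm (cu - cv) \<le> 2 * \<bar>Im s * r (h v) - Im s * r (h u)\<bar> powr \<alpha>"
    unfolding cu_def cv_def
    using norm_cis_diff_le_powr[OF alpha, of "- (Im s * r (h u))" "- (Im s * r (h v))"] by simp
  also have "\<dots> \<le> 2 * (\<bar>Im s\<bar> * (C0 * \<bar>v - u\<bar>)) powr \<alpha>"
    unfolding right_diff_distrib[symmetric] abs_mult
    using r_comp_lipschitz[OF h v u] alpha by (intro mult_left_mono powr_mono2 mult_left_mono) auto
  also have "\<dots> = 2 * C0 powr \<alpha> * B * d"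
    using C0_pos by (simp add: B_def d_def powr_mult abs_minus_commute)
  finally have cis_diff: "norm (cu - cv) \<le> 2 * C0 powr \<alpha> * B * d" .
  have "complex_weight s u h - complex_weight s v h
      = cu * complex_of_real (wu - wv) + (cu - cv) * complex_of_real wv"
    by (simp add: complex_weight_def cu_def cv_def wu_def wv_def algebra_simps)
  then have "norm (complex_weight s u h - complex_weight s v h)
      \<le> norm (cu * complex_of_real (wu - wv)) + norm ((cu - cv) * complex_of_real wv)"
    by (metis norm_triangle_ineq)
  also have "\<dots> = \<bar>wu - wv\<bar> + norm (cu - cv) * wv"
    using wv by (simp add: norm_mult cu_def del: of_real_diff)
  also have "\<dots> \<le> K * exp K * wu * d + (2 * C0 powr \<alpha> * B * d) * (exp K * wu)"
  proof (intro add_mono mult_mono)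
    show "\<bar>wu - wv\<bar> \<le> K * exp K * wu * d"
      using branch_weight_hoelder(1)[OF s h u v]
      by (simp add: K_def wu_def wv_def d_def abs_minus_commute)
    show "wv \<le> exp K * wu"
      using branch_weight_hoelder(2)[OF s h u v] by (simp add: K_def wu_def wv_def)
  qed (use cis_diff K wu wv in auto)
  also have "\<dots> = exp K * (K + 2 * C0 powr \<alpha> * B) * wu * d"
    by (simp add: algebra_simps)
  also have "\<dots> \<le> exp K * ((K + 2 * C0 powr \<alpha>) * (1 + B)) * wu * d"
    using K wu by (intro mult_right_mono mult_left_mono) (auto simp: algebra_simps)
  finally show ?thesis
    by (simp add: weight_const_def K_def B_def wu_def d_def mult.assoc)
qed

abbreviation "L \<equiv> Lnorm P F r lam f"

lemma Lnorm_has_sum: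
  assumes s: "\<bar>Re s\<bar> < \<epsilon>1" and M: "\<And>x. x \<in> DeltaI \<Longrightarrow> norm (\<psi> x) \<le> M" and u: "u \<in> DeltaI"
  shows "((\<lambda>h. complex_weight s u h * \<psi> (h u)) has_sum L s \<psi> u) H"
proof -
  have bound: "norm (complex_weight s u h * \<psi> (h u)) \<le> M * branch_weight (Re s) u h" if h: "h \<in> H" for h
    using norm_complex_weight[OF s h u] M[OF inv_branch_in_DeltaI[OF h u]] branch_weight_pos[OF s h u]
    by (simp add: norm_mult mult.commute mult_left_mono)
  have "(\<lambda>h. M * branch_weight (Re s) u h) summable_on H"
    using branch_weight_has_sum[OF s u] by (intro summable_on_cmult_right) (auto simp: summable_on_def)
  then have "(\<lambda>h. norm (complex_weight s u h * \<psi> (h u))) summable_on H"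
    by (rule summable_on_comparison_test) (auto intro: bound)
  then obtain S where S: "((\<lambda>h. complex_weight s u h * \<psi> (h u)) has_sum S) H"
    using summable_on_iff_abs_summable_on_complex by (metis summable_on_def)
  define c where "c = complex_of_real (lam (Re s) * f (Re s) u)"
  have c: "c \<noteq> 0"
    using lam_pos[OF s] f_pos[OF s u] by (simp add: c_def)
  have summand: "exp (- (s * complex_of_real (r (h u)))) * complex_of_real \<bar>deriv h u\<bar>
      * (complex_of_real (f (Re s) (h u)) * \<psi> (h u)) = complex_weight s u h * \<psi> (h u) * c" for h
  proof -
    have "exp (- (s * complex_of_real (r (h u))))
        = complex_of_real (exp (- Re s * r (h u))) * cis (- (Im s * r (h u)))"
      by (simp add: exp_eq_polar)
    then show ?thesis
      using c by (simp add: complex_weight_def branch_weight_def c_def field_simps)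
  qed
  have "Ptr P F r s (\<lambda>y. complex_of_real (f (Re s) y) * \<psi> y) u = S * c"
    unfolding Ptr_def summand by (rule infsumI[OF has_sum_cmult_left[OF S]])
  then have "L s \<psi> u = S"
    using c by (simp add: Lnorm_def c_def)
  with S show ?thesis
    by simp
qed

lemma norm_Lnorm_le:
  assumes s: "\<bar>Re s\<bar> < \<epsilon>1" and M: "\<And>x. x \<in> DeltaI \<Longrightarrow> norm (\<psi> x) \<le> M" and u: "u \<in> DeltaI"
  shows "norm (L s \<psi> u) \<le> M"
proof -
  have "norm (complex_weight s u h * \<psi> (h u)) \<le> M * branch_weight (Re s) u h" if h: "h \<in> H" for h
    using norm_complex_weight[OF s h u] M[OF inv_branch_in_DeltaI[OF h u]] branch_weight_pos[OF s h u]
    by (simp add: norm_mult mult.commute mult_left_mono)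
  then show ?thesis
    using norm_infsum_le[OF Lnorm_has_sum[OF s M u] has_sum_cmult_right[OF branch_weight_has_sum[OF s u]]]
    by simp
qed

lemma norm_Lnorm_diff_le:
  assumes s: "\<bar>Re s\<bar> < \<epsilon>1" "\<bar>Re s\<bar> \<le> 1" and M: "\<And>x. x \<in> DeltaI \<Longrightarrow> norm (\<psi> x) \<le> M"
    and u: "u \<in> DeltaI" and v: "v \<in> DeltaI"
    and E: "\<And>h. h \<in> H \<Longrightarrow> norm (\<psi> (h u) - \<psi> (h v)) \<le> E"
  shows "norm (L s \<psi> u - L s \<psi> v) \<le> E + weight_const * (1 + \<bar>Im s\<bar> powr \<alpha>) * M * \<bar>u - v\<bar> powr \<alpha>"
proof -
  define B where "B = E + weight_const * (1 + \<bar>Im s\<bar> powr \<alpha>) * M * \<bar>u - v\<bar> powr \<alpha>"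
  have "((\<lambda>h. complex_weight s u h * \<psi> (h u) - complex_weight s v h * \<psi> (h v))
      has_sum (L s \<psi> u - L s \<psi> v)) H"
    using has_sum_add[OF Lnorm_has_sum[OF s(1) M u] has_sum_uminusI[OF Lnorm_has_sum[OF s(1) M v]]]
    by simp
  moreover have "norm (complex_weight s u h * \<psi> (h u) - complex_weight s v h * \<psi> (h v))
      \<le> B * branch_weight (Re s) u h" if h: "h \<in> H" for h
  proof -
    have "complex_weight s u h * \<psi> (h u) - complex_weight s v h * \<psi> (h v)
        = complex_weight s u h * (\<psi> (h u) - \<psi> (h v)) + (complex_weight s u h - complex_weight s v h) * \<psi> (h v)"
      by (simp add: algebra_simps)
    then have "norm (complex_weight s u h * \<psi> (h u) - complex_weight s v h * \<psi> (h v))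
        \<le> norm (complex_weight s u h) * norm (\<psi> (h u) - \<psi> (h v))
          + norm (complex_weight s u h - complex_weight s v h) * norm (\<psi> (h v))"
      by (metis norm_mult norm_triangle_ineq)
    also have "\<dots> \<le> branch_weight (Re s) u h * E
        + (weight_const * (1 + \<bar>Im s\<bar> powr \<alpha>) * branch_weight (Re s) u h * \<bar>u - v\<bar> powr \<alpha>) * M"
      using norm_complex_weight[OF s(1) h u] E[OF h] complex_weight_hoelder[OF s h u v]
        M[OF inv_branch_in_DeltaI[OF h v]] branch_weight_pos[OF s(1) h u] weight_const_nonneg
      by (intro add_mono mult_mono) auto
    also have "\<dots> = B * branch_weight (Re s) u h"
      by (simp add: B_def algebra_simps)
    finally show ?thesis .
  qed
  ultimately show ?thesis
    using norm_infsum_le has_sum_cmult_right[OF branch_weight_has_sum[OF s(1) u]]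
    unfolding B_def by fastforce
qed

lemma rho_powr_less_1: "\<rho> powr \<alpha> < 1"
  using powr_less_mono2[of \<alpha> \<rho> 1] rho alpha by simp

lemma branchwise_hoelder_Lnorm:
  assumes s: "\<bar>Re s\<bar> < \<epsilon>1" "\<bar>Re s\<bar> \<le> 1" and m: "1 \<le> m"
    and M: "\<And>x. x \<in> DeltaI \<Longrightarrow> norm (\<phi> x) \<le> M"
    and hb: "branchwise_hoelder \<alpha> (Hn (Suc m)) c \<phi>"
  shows "branchwise_hoelder \<alpha> (Hn m)
           (c + weight_const * (1 + \<bar>Im s\<bar> powr \<alpha>) * M * C0 powr \<alpha> * (\<rho> powr \<alpha>) ^ m) (L s \<phi>)"
  unfolding branchwise_hoelder_def
proof (intro ballI)
  fix g x y
  assume g: "g \<in> Hn m" and x: "x \<in> DeltaI" and y: "y \<in> DeltaI"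
  define W where "W = weight_const * (1 + \<bar>Im s\<bar> powr \<alpha>) * M"
  have W: "0 \<le> W"
    using M[OF x] weight_const_nonneg by (simp add: W_def order_trans[OF norm_ge_zero])
  have gx: "g x \<in> DeltaI" and gy: "g y \<in> DeltaI"
    using inv_branches_n_in_DeltaI_differentiable[OF g] x y by blast+
  have E: "norm (\<phi> (h (g x)) - \<phi> (h (g y))) \<le> c * \<bar>x - y\<bar> powr \<alpha>" if h: "h \<in> H" for h
    using hb comp_in_inv_branches_n[OF h g] x y unfolding branchwise_hoelder_def by fastforce
  have "norm (L s \<phi> (g x) - L s \<phi> (g y)) \<le> c * \<bar>x - y\<bar> powr \<alpha> + W * \<bar>g x - g y\<bar> powr \<alpha>"
    unfolding W_def by (rule norm_Lnorm_diff_le[OF s M gx gy E])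
  also have "\<dots> \<le> c * \<bar>x - y\<bar> powr \<alpha> + W * (C0 powr \<alpha> * (\<rho> powr \<alpha>) ^ m * \<bar>x - y\<bar> powr \<alpha>)"
    using inv_branches_n_powr_lipschitz[OF _ m g x y] alpha W by (intro add_left_mono mult_left_mono) auto
  finally show "norm (L s \<phi> (g x) - L s \<phi> (g y))
      \<le> (c + weight_const * (1 + \<bar>Im s\<bar> powr \<alpha>) * M * C0 powr \<alpha> * (\<rho> powr \<alpha>) ^ m) * \<bar>x - y\<bar> powr \<alpha>"
    by (simp add: W_def algebra_simps)
qed

lemma norm_Lnorm_iter_le:
  assumes "\<bar>Re s\<bar> < \<epsilon>1" "\<And>x. x \<in> DeltaI \<Longrightarrow> norm (\<psi> x) \<le> M" "x \<in> DeltaI"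
  shows "norm ((L s ^^ n) \<psi> x) \<le> M"
  using assms(3) by (induction n arbitrary: x) (simp_all add: assms(2) norm_Lnorm_le[OF assms(1)])

lemma branchwise_hoelder_Lnorm_iter:
  assumes s: "\<bar>Re s\<bar> < \<epsilon>1" "\<bar>Re s\<bar> \<le> 1" and M: "\<And>x. x \<in> DeltaI \<Longrightarrow> norm (\<psi> x) \<le> M"
    and M0: "0 \<le> M"
  shows "1 \<le> m \<Longrightarrow> branchwise_hoelder \<alpha> (Hn (m + n)) c \<psi> \<Longrightarrow>
    branchwise_hoelder \<alpha> (Hn m)
      (c + weight_const * (1 + \<bar>Im s\<bar> powr \<alpha>) * M * C0 powr \<alpha> * ((\<rho> powr \<alpha>) ^ m / (1 - \<rho> powr \<alpha>)))
      ((L s ^^ n) \<psi>)"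
proof (induction n arbitrary: m c)
  case 0
  have "0 \<le> weight_const * (1 + \<bar>Im s\<bar> powr \<alpha>) * M * C0 powr \<alpha> * ((\<rho> powr \<alpha>) ^ m / (1 - \<rho> powr \<alpha>))"
    using weight_const_nonneg M0 rho_powr_less_1 by simp
  with 0 show ?case
    by (simp add: branchwise_hoelder_mono)
next
  case (Suc n)
  define A where "A = weight_const * (1 + \<bar>Im s\<bar> powr \<alpha>) * M * C0 powr \<alpha>"
  define q where "q = \<rho> powr \<alpha>"
  have "branchwise_hoelder \<alpha> (Hn (Suc m)) (c + A * (q ^ Suc m / (1 - q))) ((L s ^^ n) \<psi>)"
    using Suc.IH[of "Suc m" c] Suc.prems by (simp add: A_def q_def)
  then have "branchwise_hoelder \<alpha> (Hn m) (c + A * (q ^ Suc m / (1 - q)) + A * q ^ m) ((L s ^^ Suc n) \<psi>)"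
    using branchwise_hoelder_Lnorm[OF s Suc.prems(1) norm_Lnorm_iter_le[OF s(1) M]]
    by (simp add: A_def q_def mult.assoc)
  moreover have "A * (q ^ Suc m / (1 - q)) + A * q ^ m = A * (q ^ m / (1 - q))"
    using rho_powr_less_1 by (simp add: q_def field_simps)
  ultimately show ?case
    by (simp add: A_def q_def add.assoc)
qed

lemma branchwise_hoelder_of_loc_semi:
  assumes bdd: "bdd_above (loc_quots \<alpha> H \<psi>)" and n: "1 \<le> n"
  shows "branchwise_hoelder \<alpha> (Hn (Suc n)) (loc_semi \<alpha> H \<psi> * C0 powr \<alpha> * (\<rho> powr \<alpha>) ^ n) \<psi>"
  unfolding branchwise_hoelder_def
proof (intro ballI)
  fix g x y
  assume g: "g \<in> Hn (Suc n)" and x: "x \<in> DeltaI" and y: "y \<in> DeltaI"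
  from g obtain h g' where hg: "h \<in> H" "g' \<in> Hn n" "g = h \<circ> g'"
    by (rule inv_branches_n_SucE)
  have g': "g' x \<in> DeltaI" "g' y \<in> DeltaI"
    using inv_branches_n_in_DeltaI_differentiable[OF hg(2)] x y by blast+
  have "norm (\<psi> (g x) - \<psi> (g y)) \<le> loc_semi \<alpha> H \<psi> * \<bar>g' x - g' y\<bar> powr \<alpha>"
    using branchwise_hoelder_loc_semi[OF bdd] hg g' unfolding branchwise_hoelder_def by simp
  also have "\<dots> \<le> loc_semi \<alpha> H \<psi> * (C0 powr \<alpha> * (\<rho> powr \<alpha>) ^ n * \<bar>x - y\<bar> powr \<alpha>)"
    using inv_branches_n_powr_lipschitz[OF _ n hg(2) x y] alpha loc_semi_nonneg[OF inv_branches_nonempty bdd]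
    by (intro mult_left_mono) auto
  finally show "norm (\<psi> (g x) - \<psi> (g y)) \<le> loc_semi \<alpha> H \<psi> * C0 powr \<alpha> * (\<rho> powr \<alpha>) ^ n * \<bar>x - y\<bar> powr \<alpha>"
    by (simp add: mult.assoc)
qed

lemma Lnorm_iter_bounds:
  assumes s: "\<bar>Re s\<bar> < \<epsilon>1" "\<bar>Re s\<bar> \<le> 1" and n: "1 \<le> n" and \<psi>: "\<psi> \<in> C_loc \<alpha> H"
  shows "(L s ^^ n) \<psi> \<in> C_loc \<alpha> H"
    and "sup_norm ((L s ^^ n) \<psi>) \<le> sup_norm \<psi>"
    and "loc_semi \<alpha> H ((L s ^^ n) \<psi>)
           \<le> C0 powr \<alpha> * (\<rho> powr \<alpha>) ^ n * loc_semi \<alpha> H \<psi>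
             + weight_const * (1 + \<bar>Im s\<bar> powr \<alpha>) * sup_norm \<psi> * C0 powr \<alpha> * (\<rho> powr \<alpha> / (1 - \<rho> powr \<alpha>))"
proof -
  have bdd: "bdd_above (loc_quots \<alpha> H \<psi>)"
    using \<psi> by (simp add: C_loc_def)
  have M: "\<And>x. x \<in> DeltaI \<Longrightarrow> norm (\<psi> x) \<le> sup_norm \<psi>"
    using \<psi> by (simp add: C_loc_def norm_le_sup_norm)
  have M0: "0 \<le> sup_norm \<psi>"
    using \<psi> by (simp add: C_loc_def sup_norm_nonneg)
  have iter_M: "\<And>x. x \<in> DeltaI \<Longrightarrow> norm ((L s ^^ n) \<psi> x) \<le> sup_norm \<psi>"
    using norm_Lnorm_iter_le[of s \<psi> "sup_norm \<psi>"] s(1) M by blast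
  then show "sup_norm ((L s ^^ n) \<psi>) \<le> sup_norm \<psi>"
    by (rule sup_norm_le)
  have "branchwise_hoelder \<alpha> (Hn (1 + n)) (loc_semi \<alpha> H \<psi> * C0 powr \<alpha> * (\<rho> powr \<alpha>) ^ n) \<psi>"
    using branchwise_hoelder_of_loc_semi[OF bdd n] by simp
  from branchwise_hoelder_Lnorm_iter[of s \<psi> "sup_norm \<psi>" 1 n, OF s M M0 order_refl this]
  have "branchwise_hoelder \<alpha> H
      (C0 powr \<alpha> * (\<rho> powr \<alpha>) ^ n * loc_semi \<alpha> H \<psi>
        + weight_const * (1 + \<bar>Im s\<bar> powr \<alpha>) * sup_norm \<psi> * C0 powr \<alpha> * (\<rho> powr \<alpha> / (1 - \<rho> powr \<alpha>)))
      ((L s ^^ n) \<psi>)"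
    using inv_branch_in_inv_branches_n_1 unfolding branchwise_hoelder_def by (auto simp: ac_simps)
  from loc_semi_le_of_branchwise_hoelder[OF inv_branches_nonempty this]
  show "(L s ^^ n) \<psi> \<in> C_loc \<alpha> H"
    and "loc_semi \<alpha> H ((L s ^^ n) \<psi>)
           \<le> C0 powr \<alpha> * (\<rho> powr \<alpha>) ^ n * loc_semi \<alpha> H \<psi>
             + weight_const * (1 + \<bar>Im s\<bar> powr \<alpha>) * sup_norm \<psi> * C0 powr \<alpha> * (\<rho> powr \<alpha> / (1 - \<rho> powr \<alpha>))"
    using iter_M by (auto simp: C_loc_def bounded_iff)
qed

definition iterate_const :: real where
  "iterate_const = 1 + C0 powr \<alpha> + weight_const * C0 powr \<alpha> * (\<rho> powr \<alpha> / (1 - \<rho> powr \<alpha>))"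

lemma iterate_const_gt_1: "1 < iterate_const"
  using C0_pos weight_const_nonneg rho rho_powr_less_1 by (simp add: iterate_const_def add_pos_nonneg)

lemma norm_b_Lnorm_iter_le:
  assumes s: "\<bar>Re s\<bar> < \<epsilon>1" "\<bar>Re s\<bar> \<le> 1" and n: "1 \<le> n" and \<psi>: "\<psi> \<in> C_loc \<alpha> H"
  shows "norm_b \<alpha> H (Im s) ((L s ^^ n) \<psi>) \<le> iterate_const * norm_b \<alpha> H (Im s) \<psi>"
proof -
  define B where "B = 1 + \<bar>Im s\<bar> powr \<alpha>"
  define N where "N = norm_b \<alpha> H (Im s) \<psi>"
  define q where "q = \<rho> powr \<alpha>"
  define W where "W = weight_const * C0 powr \<alpha> * (q / (1 - q))"
  have B: "1 \<le> B"
    by (simp add: B_def)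
  have q: "0 < q" "q < 1"
    using rho rho_powr_less_1 by (simp_all add: q_def)
  have W: "0 \<le> W"
    using weight_const_nonneg q by (simp add: W_def)
  have N: "sup_norm \<psi> \<le> N" "loc_semi \<alpha> H \<psi> / B \<le> N"
    by (simp_all add: N_def B_def norm_b_def)
  have "0 \<le> sup_norm \<psi>"
    using \<psi> by (simp add: C_loc_def sup_norm_nonneg)
  with N(1) have "0 \<le> N"
    by linarith
  have "0 \<le> loc_semi \<alpha> H \<psi>"
    using \<psi> loc_semi_nonneg[OF inv_branches_nonempty] by (simp add: C_loc_def)
  have "loc_semi \<alpha> H ((L s ^^ n) \<psi>) / B
      \<le> (C0 powr \<alpha> * q ^ n * loc_semi \<alpha> H \<psi> + weight_const * B * sup_norm \<psi> * C0 powr \<alpha> * (q / (1 - q))) / B"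
    using Lnorm_iter_bounds(3)[OF s n \<psi>] B by (simp add: B_def q_def divide_right_mono)
  also have "\<dots> = C0 powr \<alpha> * q ^ n * (loc_semi \<alpha> H \<psi> / B) + W * sup_norm \<psi>"
    using B by (simp add: W_def field_simps)
  also have "\<dots> \<le> C0 powr \<alpha> * 1 * N + W * N"
    using N q W \<open>0 \<le> loc_semi \<alpha> H \<psi>\<close> B
    by (intro add_mono mult_mono mult_left_mono) (auto simp: power_le_one)
  also have "\<dots> \<le> iterate_const * N"
    using \<open>0 \<le> N\<close> by (simp add: iterate_const_def W_def q_def algebra_simps)
  finally have "loc_semi \<alpha> H ((L s ^^ n) \<psi>) / B \<le> iterate_const * N" .
  moreover have "sup_norm ((L s ^^ n) \<psi>) \<le> iterate_const * N"
  proof -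
    have "N \<le> iterate_const * N"
      using \<open>0 \<le> N\<close> iterate_const_gt_1 by (simp add: mult_le_cancel_right1)
    then show ?thesis
      using Lnorm_iter_bounds(2)[OF s n \<psi>] N(1) by linarith
  qed
  ultimately show ?thesis
    by (simp add: norm_b_def N_def B_def)
qed

lemma Lnorm_iterates_uniformly_bounded:
  "\<exists>\<epsilon> C. 0 < \<epsilon> \<and> \<epsilon> < 1 \<and> \<epsilon> \<le> \<epsilon>1 \<and> C > 1 \<and>
     (\<forall>s::complex. \<bar>Re s\<bar> < \<epsilon> \<longrightarrow> (\<forall>n\<ge>1. \<forall>\<psi>\<in>C_loc \<alpha> H.
        (L s ^^ n) \<psi> \<in> C_loc \<alpha> H
        \<and> norm_b \<alpha> H (Im s) ((L s ^^ n) \<psi>) \<le> C * norm_b \<alpha> H (Im s) \<psi>))"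
proof (intro exI conjI allI impI ballI)
  show "0 < min \<epsilon>1 (1/2)" "min \<epsilon>1 (1/2) < 1" "min \<epsilon>1 (1/2) \<le> \<epsilon>1"
    using eps1 by auto
  show "1 < iterate_const"
    by (rule iterate_const_gt_1)
  fix s :: complex and n :: nat and \<psi>
  assume "\<bar>Re s\<bar> < min \<epsilon>1 (1/2)" "1 \<le> n" "\<psi> \<in> C_loc \<alpha> H"
  then show "(L s ^^ n) \<psi> \<in> C_loc \<alpha> H"
    and "norm_b \<alpha> H (Im s) ((L s ^^ n) \<psi>) \<le> iterate_const * norm_b \<alpha> H (Im s) \<psi>"
    using Lnorm_iter_bounds(1) norm_b_Lnorm_iter_le by auto
qed

end

theorem corollary6p6:
  fixes \<alpha> C0 \<rho> \<epsilon>0 \<epsilon>1 :: real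
    and P :: "real set set" and F r lam :: "real \<Rightarrow> real" and f :: "real \<Rightarrow> real \<Rightarrow> real"
  assumes alpha: "0 < \<alpha>" "\<alpha> \<le> 1"
    and part: "mod0_partition P"
    and full_branch: "\<forall>A\<in>P. bij_betw F A DeltaI"
    and F_C1alpha: "\<forall>A\<in>P. (\<forall>x\<in>A. F differentiable (at x))
                        \<and> (\<exists>K. \<forall>x\<in>A. \<forall>y\<in>A. \<bar>deriv F x - deriv F y\<bar> \<le> K * \<bar>x - y\<bar> powr \<alpha>)"
    and constants: "C0 > 0" "0 < \<rho>" "\<rho> < 1"
    and h_diff: "\<forall>h\<in>inv_branches P F. \<forall>x\<in>DeltaI. h differentiable (at x) \<and> deriv h x \<noteq> 0"
    and h_contr: "\<forall>n\<ge>1. \<forall>h\<in>inv_branches_n P F n. \<forall>x\<in>DeltaI. \<bar>deriv h x\<bar> \<le> C0 * \<rho> ^ n"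
    and h_dist: "\<forall>h\<in>inv_branches P F. \<forall>x\<in>DeltaI. \<forall>y\<in>DeltaI.
                   \<bar>ln \<bar>deriv h x\<bar> - ln \<bar>deriv h y\<bar>\<bar> \<le> C0 * \<bar>x - y\<bar> powr \<alpha>"
    and r_pos: "\<forall>x\<in>{0..1}. r x > 0"
    and r_C1: "\<forall>A\<in>P. (\<forall>x\<in>A. r differentiable (at x)) \<and> continuous_on A (deriv r)"
    and r_h: "\<forall>h\<in>inv_branches P F. \<forall>x\<in>DeltaI. \<bar>deriv (r \<circ> h) x\<bar> \<le> C0"
    and eps0: "\<epsilon>0 > 0"
    and r_sum: "(\<lambda>h. exp (\<epsilon>0 * (SUP x\<in>DeltaI. \<bar>r (h x)\<bar>)) * (SUP x\<in>DeltaI. \<bar>deriv h x\<bar>))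
                  summable_on inv_branches P F"
    and eps1: "\<epsilon>1 > 0"
    and eigen: "\<forall>\<sigma>. \<bar>\<sigma>\<bar> < \<epsilon>1 \<longrightarrow> lam \<sigma> > 0 \<and> (\<forall>x\<in>DeltaI. f \<sigma> x > 0)
                  \<and> hoelder_on \<alpha> DeltaI (f \<sigma>)
                  \<and> (\<forall>x\<in>DeltaI. Ptr P F r (complex_of_real \<sigma>) (\<lambda>y. complex_of_real (f \<sigma> y)) x
                                  = complex_of_real (lam \<sigma> * f \<sigma> x))"
    and simple_leading: "\<forall>\<sigma>. \<bar>\<sigma>\<bar> < \<epsilon>1 \<longrightarrow> (\<forall>(\<mu>::complex) (g::real \<Rightarrow> complex).
                  hoelder_on \<alpha> DeltaI g \<and> (\<exists>x\<in>DeltaI. g x \<noteq> 0)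
                  \<and> (\<forall>x\<in>DeltaI. Ptr P F r (complex_of_real \<sigma>) g x = \<mu> * g x)
                  \<longrightarrow> norm \<mu> \<le> lam \<sigma>
                      \<and> (\<mu> = complex_of_real (lam \<sigma>) \<longrightarrow>
                           (\<exists>c. \<forall>x\<in>DeltaI. g x = c * complex_of_real (f \<sigma> x))))"
    and lam0: "lam 0 = 1"
    and lam_cont: "continuous_on {-\<epsilon>1<..<\<epsilon>1} lam"
    and f_cont: "\<forall>\<sigma>0. \<bar>\<sigma>0\<bar> < \<epsilon>1 \<longrightarrow>
                  ((\<lambda>\<sigma>. hoelder_norm \<alpha> DeltaI (\<lambda>x. f \<sigma> x - f \<sigma>0 x)) \<longlongrightarrow> 0) (at \<sigma>0)"
    and bounds: "\<forall>\<sigma>. \<bar>\<sigma>\<bar> < \<epsilon>1 \<longrightarrow> 1/2 \<le> lam \<sigma> \<and> lam \<sigma> \<le> 2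
                  \<and> (\<forall>x\<in>DeltaI. f 0 x / 2 \<le> f \<sigma> x \<and> f \<sigma> x \<le> 2 * f 0 x)
                  \<and> hoelder_semi \<alpha> DeltaI (f 0) / 2 \<le> hoelder_semi \<alpha> DeltaI (f \<sigma>)
                  \<and> hoelder_semi \<alpha> DeltaI (f \<sigma>) \<le> 2 * hoelder_semi \<alpha> DeltaI (f 0)"
  shows "\<exists>\<epsilon> C. 0 < \<epsilon> \<and> \<epsilon> < 1 \<and> \<epsilon> \<le> \<epsilon>1 \<and> C > 1 \<and>
           (\<forall>s::complex. \<bar>Re s\<bar> < \<epsilon> \<longrightarrow> (\<forall>n\<ge>1. \<forall>\<psi>\<in>C_loc \<alpha> (inv_branches P F).
              (Lnorm P F r lam f s ^^ n) \<psi> \<in> C_loc \<alpha> (inv_branches P F)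
              \<and> norm_b \<alpha> (inv_branches P F) (Im s) ((Lnorm P F r lam f s ^^ n) \<psi>)
                   \<le> C * norm_b \<alpha> (inv_branches P F) (Im s) \<psi>))"
proof -
  interpret normalised_transfer_operator P F C0 \<rho> \<alpha> \<epsilon>1 r lam f
  proof unfold_locales
    show "\<forall>A\<in>P. \<forall>x\<in>A. r differentiable (at x)"
      using r_C1 by blast
    show "\<forall>\<sigma>. \<bar>\<sigma>\<bar> < \<epsilon>1 \<longrightarrow> (\<forall>x\<in>DeltaI. f 0 x / 2 \<le> f \<sigma> x)"
      and "\<forall>\<sigma>. \<bar>\<sigma>\<bar> < \<epsilon>1 \<longrightarrow> hoelder_semi \<alpha> DeltaI (f \<sigma>) \<le> 2 * hoelder_semi \<alpha> DeltaI (f 0)"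
      using bounds by blast+
  qed (fact part full_branch constants h_diff h_contr alpha h_dist r_h eps1 eigen lam0)+
  show ?thesis
    by (rule Lnorm_iterates_uniformly_bounded)
qed

end
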